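(* Let $n\ge 2$ and $\alpha,\beta\in[0,1]$. Suppose $U$ is a $2n$-qubit circuit such that $U|\mathrm{CAT}^{\alpha}_{2n}\rangle\langle\mathrm{CAT}^{\alpha}_{2n}|U^\dagger = |\mathrm{CAT}^{\beta}_{n}\rangle\langle\mathrm{CAT}^{\beta}_{n}|\otimes|\mathrm{CAT}^{\beta}_{n}\rangle\langle\mathrm{CAT}^{\beta}_{n}|$. If $H(\alpha)\neq 2H(\beta)$, then $U$ requires depth $\Omega(\log n)$. Moreover, if $V$ is a $2n$-qubit circuit with $V|\mathrm{CAT}^{\alpha}_{2n}\rangle\langle\mathrm{CAT}^{\alpha}_{2n}|V^\dagger = \psi$ and $\|\psi - |\mathrm{CAT}^{\beta}_{n}\rangle\langle\mathrm{CAT}^{\beta}_{n}|\otimes|\mathrm{CAT}^{\beta}_{n}\rangle\langle\mathrm{CAT}^{\beta}_{n}|\|_1\le\varepsilon$, then $\mathrm{depth}(V)\geq\Omega\left(\log\min\left\{n,\frac{1}{\varepsilon}\,|2H(\beta)-H(\alpha)|^{\ln 4}\right\}\right)$.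
   Context: The $\gamma$-biased CAT state on $m$ qubits is $|\mathrm{CAT}^{\gamma}_m\rangle = \sqrt{\gamma}|0^m\rangle+\sqrt{1-\gamma}|1^m\rangle$. $H(p)=-p\log p-(1-p)\log(1-p)$ is the binary entropy function. Circuits consist of layers of one- and two-qubit gates; depth is the number of layers. $\|\cdot\|_1$ is the trace norm. *)

theory Defs
  imports "Jordan_Normal_Form.Matrix" "Jordan_Normal_Form.Char_Poly"
begin

text \<open>An m-qubit register has Hilbert space of dimension 2^m; basis index x
  encodes the computational basis string with qubit k given by bit k of x.\<close>

definition qbit :: "nat \<Rightarrow> nat \<Rightarrow> nat" where
  "qbit k x = x div 2 ^ k mod 2"

definition adj :: "complex mat \<Rightarrow> complex mat" where
  "adj A = mat (dim_col A) (dim_row A) (\<lambda>(i,j). cnj (A $$ (j,i)))"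

definition is_unitary :: "nat \<Rightarrow> complex mat \<Rightarrow> bool" where
  "is_unitary d U \<longleftrightarrow> U \<in> carrier_mat d d \<and> adj U * U = 1\<^sub>m d"

type_synonym gate = "nat list \<times> complex mat"

definition valid_gate :: "nat \<Rightarrow> gate \<Rightarrow> bool" where
  "valid_gate m g \<longleftrightarrow> (let qs = fst g in
     (length qs = 1 \<or> length qs = 2) \<and> distinct qs \<and> set qs \<subseteq> {..<m}
     \<and> is_unitary (2 ^ length qs) (snd g))"

definition loc_index :: "nat list \<Rightarrow> nat \<Rightarrow> nat" where
  "loc_index qs x = (\<Sum>t<length qs. qbit (qs ! t) x * 2 ^ (length qs - 1 - t))"

definition embed_gate :: "nat \<Rightarrow> gate \<Rightarrow> complex mat" where
  "embed_gate m g = mat (2 ^ m) (2 ^ m) (\<lambda>(x,y).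
     if (\<forall>k<m. k \<notin> set (fst g) \<longrightarrow> qbit k x = qbit k y)
     then snd g $$ (loc_index (fst g) x, loc_index (fst g) y) else 0)"

type_synonym layer = "gate list"

definition valid_layer :: "nat \<Rightarrow> layer \<Rightarrow> bool" where
  "valid_layer m L \<longleftrightarrow> (\<forall>g \<in> set L. valid_gate m g) \<and>
     (\<forall>i<length L. \<forall>j<length L. i \<noteq> j \<longrightarrow> set (fst (L ! i)) \<inter> set (fst (L ! j)) = {})"

definition layer_mat :: "nat \<Rightarrow> layer \<Rightarrow> complex mat" where
  "layer_mat m L = foldr (\<lambda>g M. embed_gate m g * M) L (1\<^sub>m (2 ^ m))"

text \<open>A circuit is a list of layers (first layer applied first); its depth is
  the number of layers.\<close>
type_synonym circuit = "layer list"

definition valid_circuit :: "nat \<Rightarrow> circuit \<Rightarrow> bool" where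
  "valid_circuit m C \<longleftrightarrow> (\<forall>L \<in> set C. valid_layer m L)"

definition circuit_mat :: "nat \<Rightarrow> circuit \<Rightarrow> complex mat" where
  "circuit_mat m C = foldl (\<lambda>M L. layer_mat m L * M) (1\<^sub>m (2 ^ m)) C"

definition depth :: "circuit \<Rightarrow> nat" where
  "depth C = length C"

definition cat_vec :: "real \<Rightarrow> nat \<Rightarrow> complex vec" where
  "cat_vec \<gamma> m = vec (2 ^ m) (\<lambda>i. if i = 0 then complex_of_real (sqrt \<gamma>)
      else if i = 2 ^ m - 1 then complex_of_real (sqrt (1 - \<gamma>)) else 0)"

definition proj :: "complex vec \<Rightarrow> complex mat" where
  "proj v = mat (dim_vec v) (dim_vec v) (\<lambda>(i,j). v $ i * cnj (v $ j))"

definition cat_dm :: "real \<Rightarrow> nat \<Rightarrow> complex mat" where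
  "cat_dm \<gamma> m = proj (cat_vec \<gamma> m)"

definition tensor_mat :: "complex mat \<Rightarrow> complex mat \<Rightarrow> complex mat" where
  "tensor_mat A B = mat (dim_row A * dim_row B) (dim_col A * dim_col B)
     (\<lambda>(i,j). A $$ (i div dim_row B, j div dim_col B) * B $$ (i mod dim_row B, j mod dim_col B))"

text \<open>Trace norm = sum of singular values = sum, with algebraic multiplicity,
  of the square roots of the eigenvalues of A^dagger A.\<close>
definition trace_norm :: "complex mat \<Rightarrow> real" where
  "trace_norm A = (let p = char_poly (adj A * A) in
     \<Sum>z\<in>{x. poly p x = 0}. real (order z p) * sqrt (Re z))"

definition bin_entropy :: "real \<Rightarrow> real" where
  "bin_entropy p = (if p = 0 \<or> p = 1 then 0 else - p * log 2 p - (1 - p) * log 2 (1 - p))"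

end

(*
  A circuit of depth d spreads a single qubit to at most 2^d qubits.  If 2 * 4^d < n, then the
  light cones of suitably chosen qubits are disjoint and each misses a qubit in both halves of
  the register.  Since the branches 0...0 and 1...1 of a CAT state differ on every qubit, local
  observables cannot see coherences between branches: in the Heisenberg picture, the Z-statistics
  of the output of a shallow circuit on an alpha-CAT state are those of a classical two-branch
  mixture, and in the Schroedinger picture the Z-statistics of the input, read on the pair of
  beta-CAT states, are those of a four-branch mixture.  Comparing one- and two-point correlations
  with those of the target state (up to twice the trace distance) forces beta (1 - beta) and
  alpha (1 - alpha) to be O(epsilon).  As H(p) = O((p (1 - p))^(1 / ln 4)), this bounds
  |2 H(beta) - H(alpha)|^(ln 4) by O(epsilon); in the exact case alpha and beta are 0 or 1, so
  H(alpha) = 2 H(beta) = 0.  So either 2 * 4^d >= n or |2 H(beta) - H(alpha)|^(ln 4) / epsilon is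
  bounded by a constant.
*)
theory Submission
  imports Defs "Jordan_Normal_Form.Schur_Decomposition"
begin

lemma bit_nat_less_pow2: "(x::nat) < 2^m \<Longrightarrow> bit x k \<Longrightarrow> k < m"
  by (metis bit_take_bit_iff take_bit_nat_eq_self_iff)

lemma nat_less_pow2_if_bits: "(\<And>k. bit (x::nat) k \<Longrightarrow> k < m) \<Longrightarrow> x < 2^m"
  by (metis bit_take_bit_iff bit_eq_iff take_bit_nat_eq_self_iff)

lemma sum_eq_single:
  assumes "finite A" "a \<in> A" "\<And>z. z \<in> A \<Longrightarrow> z \<noteq> a \<Longrightarrow> f z = 0"
  shows "sum f A = f a"
  using sum.mono_neutral_right[of A "{a}" f] assms by auto

lemma mult_entry:
  assumes "A \<in> carrier_mat n k" "B \<in> carrier_mat k l" "i < n" "j < l"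
  shows "(A * B) $$ (i,j) = (\<Sum>z<k. A $$ (i,z) * B $$ (z,j))"
  using assms by (auto simp: scalar_prod_def lessThan_atLeast0 intro!: sum.cong)

lemma adj_dim [simp]: "dim_row (adj A) = dim_col A" "dim_col (adj A) = dim_row A"
  by (auto simp: adj_def)

lemma adj_carrier: "A \<in> carrier_mat n k \<Longrightarrow> adj A \<in> carrier_mat k n"
  by (auto simp: adj_def)

lemma adj_index [simp]: "i < dim_col A \<Longrightarrow> j < dim_row A \<Longrightarrow> adj A $$ (i,j) = cnj (A $$ (j,i))"
  by (simp add: adj_def)

lemma adj_adj [simp]: "adj (adj A) = A"
  by (rule eq_matI) simp_all

lemma adj_one [simp]: "adj (1\<^sub>m n) = 1\<^sub>m n"
  by (rule eq_matI) (auto simp: adj_def)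

lemma adj_mult:
  assumes "A \<in> carrier_mat n k" "B \<in> carrier_mat k l"
  shows "adj (A * B) = adj B * adj A"
proof (rule eq_matI)
  fix i j assume "i < dim_row (adj B * adj A)" "j < dim_col (adj B * adj A)"
  then have i: "i < l" and j: "j < n" using assms by auto
  have "adj (A * B) $$ (i,j) = cnj (\<Sum>z<k. A $$ (j,z) * B $$ (z,i))"
    using assms i j mult_entry[OF assms j i] by simp
  also have "\<dots> = (\<Sum>z<k. adj B $$ (i,z) * adj A $$ (z,j))"
    using assms i j by (auto simp: mult.commute intro!: sum.cong)
  also have "\<dots> = (adj B * adj A) $$ (i,j)"
    using mult_entry[OF adj_carrier[OF assms(2)] adj_carrier[OF assms(1)] i j] by simp
  finally show "adj (A * B) $$ (i,j) = (adj B * adj A) $$ (i,j)" .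
qed (use assms in auto)

lemma unitary_adj_mult: "is_unitary d U \<Longrightarrow> adj U * U = 1\<^sub>m d"
  by (simp add: is_unitary_def)

lemma unitary_mult_adj: "is_unitary d U \<Longrightarrow> U * adj U = 1\<^sub>m d"
  using mat_mult_left_right_inverse[of "adj U" d U] adj_carrier[of U d d]
  unfolding is_unitary_def by auto

lemma unitary_adj: "is_unitary d U \<Longrightarrow> is_unitary d (adj U)"
  using unitary_mult_adj[of d U] adj_carrier[of U d d] unfolding is_unitary_def by auto

lemma unitary_one: "is_unitary d (1\<^sub>m d)"
  unfolding is_unitary_def by simp

lemma unitary_mult:
  assumes U: "is_unitary d U" and V: "is_unitary d V"
  shows "is_unitary d (U * V)"
proof -
  have c: "U \<in> carrier_mat d d" "V \<in> carrier_mat d d" "adj U \<in> carrier_mat d d" "adj V \<in> carrier_mat d d"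
    using assms adj_carrier unfolding is_unitary_def by auto
  have "adj (U * V) * (U * V) = adj V * (adj U * U) * V"
    using c by (simp add: adj_mult[OF c(1,2)] assoc_mult_mat[of _ d d _ d _ d])
  also have "\<dots> = 1\<^sub>m d" using assms c unfolding is_unitary_def by simp
  finally show ?thesis using c unfolding is_unitary_def by simp
qed

lemma unitary_conj: "is_unitary d U \<Longrightarrow> is_unitary d V \<Longrightarrow> is_unitary d (U * V * adj U)"
  by (intro unitary_mult unitary_adj)

lemma conj_mult_distrib:
  assumes W: "W \<in> carrier_mat N N" and WW: "W * adj W = 1\<^sub>m N"
    and A: "A \<in> carrier_mat N N" and B: "B \<in> carrier_mat N N"
  shows "adj W * (A * B) * W = (adj W * A * W) * (adj W * B * W)"
proof -
  have aW: "adj W \<in> carrier_mat N N" using adj_carrier[OF W] .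
  have "(adj W * A * W) * (adj W * B * W) = adj W * A * (W * adj W) * B * W"
    using W aW A B by (simp add: assoc_mult_mat[of _ N N _ N _ N])
  also have "\<dots> = adj W * (A * B) * W" using WW W aW A B by (simp add: assoc_mult_mat[of _ N N _ N _ N])
  finally show ?thesis by simp
qed

section \<open>Operators acting on a subset of the qubits\<close>

definition agree_outside :: "nat set \<Rightarrow> nat \<Rightarrow> nat \<Rightarrow> bool" where
  "agree_outside S x y \<longleftrightarrow> (\<forall>k. k \<notin> S \<longrightarrow> bit x k = bit y k)"

definition agree_on :: "nat set \<Rightarrow> nat \<Rightarrow> nat \<Rightarrow> bool" where
  "agree_on S x y \<longleftrightarrow> (\<forall>k\<in>S. bit x k = bit y k)"

lemma agree_outside_sym: "agree_outside S x y \<longleftrightarrow> agree_outside S y x"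
  unfolding agree_outside_def by auto

lemma agree_outside_trans: "agree_outside S x y \<Longrightarrow> agree_outside S y z \<Longrightarrow> agree_outside S x z"
  unfolding agree_outside_def by auto

lemma agree_on_sym: "agree_on S x y \<longleftrightarrow> agree_on S y x"
  unfolding agree_on_def by auto

lemma agree_outside_agree_on_eq: "agree_outside S x y \<Longrightarrow> agree_on S x y \<Longrightarrow> x = y"
  unfolding agree_outside_def agree_on_def by (metis bit_eq_iff)

lemma agree_outside_transfer:
  assumes "S \<subseteq> T" "agree_outside T x y" "agree_outside T x' y'" "agree_on T x x'" "agree_on T y y'"
  shows "agree_outside S x y \<longleftrightarrow> agree_outside S x' y'"
  using assms unfolding agree_outside_def agree_on_def by metis

text \<open>The basis index with the bits of \<open>a\<close> on \<open>S\<close> and the bits of \<open>b\<close> elsewhere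
  (truncated to \<open>m\<close> qubits).\<close>

definition splice :: "nat \<Rightarrow> nat set \<Rightarrow> nat \<Rightarrow> nat \<Rightarrow> nat" where
  "splice m S a b = horner_sum of_bool 2 (map (\<lambda>k. if k \<in> S then bit a k else bit b k) [0..<m])"

lemma bit_splice: "bit (splice m S a b) k \<longleftrightarrow> k < m \<and> (if k \<in> S then bit a k else bit b k)"
  by (auto simp: splice_def bit_horner_sum_bit_iff)

lemma splice_less: "splice m S a b < 2^m"
  by (rule nat_less_pow2_if_bits) (simp add: bit_splice)

text \<open>\<open>acts_on m S M\<close>: the \<open>2^m \<times> 2^m\<close> matrix \<open>M\<close> is \<open>M\<^sub>S \<otimes> 1\<close> for some operator \<open>M\<^sub>S\<close> on
  the qubits in \<open>S\<close>.\<close>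

definition acts_on :: "nat \<Rightarrow> nat set \<Rightarrow> complex mat \<Rightarrow> bool" where
  "acts_on m S M \<longleftrightarrow> M \<in> carrier_mat (2^m) (2^m) \<and>
     (\<forall>x y. x < 2^m \<longrightarrow> y < 2^m \<longrightarrow> \<not> agree_outside S x y \<longrightarrow> M $$ (x,y) = 0) \<and>
     (\<forall>x y x' y'. x < 2^m \<longrightarrow> y < 2^m \<longrightarrow> x' < 2^m \<longrightarrow> y' < 2^m \<longrightarrow>
        agree_outside S x y \<longrightarrow> agree_outside S x' y' \<longrightarrow> agree_on S x x' \<longrightarrow> agree_on S y y' \<longrightarrow>
        M $$ (x,y) = M $$ (x',y'))"

lemma acts_onD:
  assumes "acts_on m S M"
  shows acts_on_carrier: "M \<in> carrier_mat (2^m) (2^m)"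
    and acts_on_zero: "x < 2^m \<Longrightarrow> y < 2^m \<Longrightarrow> \<not> agree_outside S x y \<Longrightarrow> M $$ (x,y) = 0"
    and acts_on_eq: "x < 2^m \<Longrightarrow> y < 2^m \<Longrightarrow> x' < 2^m \<Longrightarrow> y' < 2^m \<Longrightarrow>
        agree_outside S x y \<Longrightarrow> agree_outside S x' y' \<Longrightarrow> agree_on S x x' \<Longrightarrow> agree_on S y y' \<Longrightarrow>
        M $$ (x,y) = M $$ (x',y')"
  using assms unfolding acts_on_def by blast+

lemma acts_onI:
  assumes "M \<in> carrier_mat (2^m) (2^m)"
    and "\<And>x y. x < 2^m \<Longrightarrow> y < 2^m \<Longrightarrow> \<not> agree_outside S x y \<Longrightarrow> M $$ (x,y) = 0"
    and "\<And>x y x' y'. x < 2^m \<Longrightarrow> y < 2^m \<Longrightarrow> x' < 2^m \<Longrightarrow> y' < 2^m \<Longrightarrow>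
        agree_outside S x y \<Longrightarrow> agree_outside S x' y' \<Longrightarrow> agree_on S x x' \<Longrightarrow> agree_on S y y' \<Longrightarrow>
        M $$ (x,y) = M $$ (x',y')"
  shows "acts_on m S M"
  using assms unfolding acts_on_def by blast

lemma acts_on_mono:
  assumes M: "acts_on m S M" and "S \<subseteq> T"
  shows "acts_on m T M"
proof (rule acts_onI)
  show "M \<in> carrier_mat (2^m) (2^m)" using acts_on_carrier[OF M] .
next
  fix x y assume "x < 2^m" "y < 2^m" "\<not> agree_outside T x y"
  moreover from this(3) have "\<not> agree_outside S x y"
    using \<open>S \<subseteq> T\<close> by (auto simp: agree_outside_def)
  ultimately show "M $$ (x,y) = 0" using acts_on_zero[OF M] by blast
next
  fix x y x' y' assume xy: "x < 2^m" "y < 2^m" "x' < 2^m" "y' < 2^m"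
    and a: "agree_outside T x y" "agree_outside T x' y'" "agree_on T x x'" "agree_on T y y'"
  have same: "agree_outside S x y \<longleftrightarrow> agree_outside S x' y'"
    using agree_outside_transfer[OF \<open>S \<subseteq> T\<close> a] .
  show "M $$ (x,y) = M $$ (x',y')"
  proof (cases "agree_outside S x y")
    case True
    have "agree_on S x x'" "agree_on S y y'" using a(3,4) \<open>S \<subseteq> T\<close> by (auto simp: agree_on_def)
    with True same show ?thesis using acts_on_eq[OF M xy] by blast
  next
    case False
    then show ?thesis using same acts_on_zero[OF M] xy by metis
  qed
qed

definition middle_indices :: "nat \<Rightarrow> nat set \<Rightarrow> nat set \<Rightarrow> nat \<Rightarrow> nat \<Rightarrow> nat set" where
  "middle_indices m S T x y = {z. z < 2^m \<and> agree_outside S x z \<and> agree_outside T z y}"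

lemma mult_entry_middle_indices:
  assumes A: "acts_on m S A" and B: "acts_on m T B" and "x < 2^m" "y < 2^m"
  shows "(A * B) $$ (x,y) = (\<Sum>z\<in>middle_indices m S T x y. A $$ (x,z) * B $$ (z,y))"
proof -
  have "(A * B) $$ (x,y) = (\<Sum>z<2^m. A $$ (x,z) * B $$ (z,y))"
    using mult_entry[OF acts_on_carrier[OF A] acts_on_carrier[OF B]] assms by blast
  also have "\<dots> = (\<Sum>z\<in>middle_indices m S T x y. A $$ (x,z) * B $$ (z,y))"
    by (rule sum.mono_neutral_right)
      (use assms acts_on_zero[OF A] acts_on_zero[OF B] in \<open>auto simp: middle_indices_def\<close>)
  finally show ?thesis .
qed

lemma splice_middle_index:
  assumes z: "z \<in> middle_indices m S T x y" and "x' < 2^m" "y' < 2^m"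
    and "agree_outside (S \<union> T) x' y'" "agree_on (S \<union> T) x x'" "agree_on (S \<union> T) y y'"
  shows "splice m (S \<union> T) z x' \<in> middle_indices m S T x' y'"
  using assms bit_nat_less_pow2[of x' m] bit_nat_less_pow2[of y' m]
  unfolding middle_indices_def agree_outside_def agree_on_def
  by (auto simp: splice_less bit_splice)

lemma splice_splice:
  assumes "z < 2^m" "x < 2^m" "agree_outside U x z"
  shows "splice m U (splice m U z x') x = z"
  using assms bit_nat_less_pow2[of z m] bit_nat_less_pow2[of x m]
  by (intro bit_eqI) (auto simp: bit_splice agree_outside_def)

lemma bij_betw_splice_middle_indices:
  assumes "x < 2^m" "y < 2^m" "x' < 2^m" "y' < 2^m"
    and a: "agree_outside (S \<union> T) x y" "agree_outside (S \<union> T) x' y'"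
      "agree_on (S \<union> T) x x'" "agree_on (S \<union> T) y y'"
  shows "bij_betw (\<lambda>z. splice m (S \<union> T) z x') (middle_indices m S T x y) (middle_indices m S T x' y')"
proof (rule bij_betw_byWitness[where f' = "\<lambda>z. splice m (S \<union> T) z x"])
  have outside: "agree_outside (S \<union> T) u z" if "z \<in> middle_indices m S T u v" for u v z
    using that by (auto simp: middle_indices_def agree_outside_def)
  show "\<forall>z\<in>middle_indices m S T x y. splice m (S \<union> T) (splice m (S \<union> T) z x') x = z"
    using assms(1) outside by (auto intro: splice_splice simp: middle_indices_def)
  show "\<forall>z\<in>middle_indices m S T x' y'. splice m (S \<union> T) (splice m (S \<union> T) z x) x' = z"
    using assms(3) outside by (auto intro: splice_splice simp: middle_indices_def)
  show "(\<lambda>z. splice m (S \<union> T) z x') ` middle_indices m S T x y \<subseteq> middle_indices m S T x' y'"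
    using assms by (auto intro: splice_middle_index)
  show "(\<lambda>z. splice m (S \<union> T) z x) ` middle_indices m S T x' y' \<subseteq> middle_indices m S T x y"
    using assms agree_on_sym by (auto intro!: splice_middle_index)
qed

lemma acts_on_mult:
  assumes A: "acts_on m S A" and B: "acts_on m T B"
  shows "acts_on m (S \<union> T) (A * B)"
proof (rule acts_onI)
  show "A * B \<in> carrier_mat (2^m) (2^m)"
    using acts_on_carrier[OF A] acts_on_carrier[OF B] by simp
next
  fix x y assume xy: "x < 2^m" "y < 2^m" "\<not> agree_outside (S \<union> T) x y"
  then have "middle_indices m S T x y = {}"
    by (auto simp: middle_indices_def agree_outside_def)
  then show "(A * B) $$ (x,y) = 0" using mult_entry_middle_indices[OF A B xy(1,2)] by simp
next
  fix x y x' y' assume xy: "x < 2^m" "y < 2^m" "x' < 2^m" "y' < 2^m"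
    and a: "agree_outside (S \<union> T) x y" "agree_outside (S \<union> T) x' y'"
      "agree_on (S \<union> T) x x'" "agree_on (S \<union> T) y y'"
  let ?\<phi> = "\<lambda>z. splice m (S \<union> T) z x'"
  have bij: "bij_betw ?\<phi> (middle_indices m S T x y) (middle_indices m S T x' y')"
    by (rule bij_betw_splice_middle_indices[OF xy a])
  have "A $$ (x,z) * B $$ (z,y) = A $$ (x', ?\<phi> z) * B $$ (?\<phi> z, y')"
    if z: "z \<in> middle_indices m S T x y" for z
  proof -
    have \<phi>z: "?\<phi> z \<in> middle_indices m S T x' y'" using bij z by (auto simp: bij_betw_def)
    have "agree_on (S \<union> T) z (?\<phi> z)"
      using z bit_nat_less_pow2[of z m] by (auto simp: agree_on_def bit_splice middle_indices_def)
    then have "agree_on S z (?\<phi> z)" "agree_on T z (?\<phi> z)" "agree_on S x x'" "agree_on T y y'"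
      using a(3,4) by (auto simp: agree_on_def)
    then show ?thesis
      using acts_on_eq[OF A, of x z x' "?\<phi> z"] acts_on_eq[OF B, of z y "?\<phi> z" y'] xy z \<phi>z
      by (auto simp: middle_indices_def)
  qed
  then have "(A * B) $$ (x,y) = (\<Sum>z\<in>middle_indices m S T x y. A $$ (x', ?\<phi> z) * B $$ (?\<phi> z, y'))"
    using mult_entry_middle_indices[OF A B xy(1,2)] by simp
  also have "\<dots> = (\<Sum>w\<in>middle_indices m S T x' y'. A $$ (x', w) * B $$ (w, y'))"
    by (rule sum.reindex_bij_betw[OF bij])
  also have "\<dots> = (A * B) $$ (x',y')" using mult_entry_middle_indices[OF A B xy(3,4)] by simp
  finally show "(A * B) $$ (x,y) = (A * B) $$ (x',y')" .
qed

lemma acts_on_adj: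
  assumes M: "acts_on m S M" shows "acts_on m S (adj M)"
proof (rule acts_onI)
  have c: "M \<in> carrier_mat (2^m) (2^m)" using acts_on_carrier[OF M] .
  then show "adj M \<in> carrier_mat (2^m) (2^m)" by (rule adj_carrier)
  show "adj M $$ (x,y) = 0" if "x < 2^m" "y < 2^m" "\<not> agree_outside S x y" for x y
    using that c acts_on_zero[OF M, of y x] agree_outside_sym by auto
  show "adj M $$ (x,y) = adj M $$ (x',y')"
    if "x < 2^m" "y < 2^m" "x' < 2^m" "y' < 2^m" "agree_outside S x y" "agree_outside S x' y'"
      "agree_on S x x'" "agree_on S y y'" for x y x' y'
    using that c acts_on_eq[OF M, of y x y' x'] agree_outside_sym by auto
qed

lemma mult_entry_disjoint:
  assumes A: "acts_on m S A" and B: "acts_on m T B" and ST: "S \<inter> T = {}"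
    and xy: "x < 2^m" "y < 2^m"
  shows "(A * B) $$ (x,y) = A $$ (x, splice m S y x) * B $$ (splice m S y x, y)"
proof -
  let ?z = "splice m S y x"
  have "z = ?z" if "z \<in> middle_indices m S T x y" for z
    using that ST bit_nat_less_pow2[of z m]
    by (intro bit_eqI) (auto simp: bit_splice agree_outside_def middle_indices_def)
  moreover have "(A * B) $$ (x,y) = (\<Sum>z\<in>middle_indices m S T x y. A $$ (x,z) * B $$ (z,y))"
    by (rule mult_entry_middle_indices[OF A B xy])
  ultimately have "(A * B) $$ (x,y) = (\<Sum>z\<in>middle_indices m S T x y \<inter> {?z}. A $$ (x,z) * B $$ (z,y))"
    by (metis Int_absorb2 subsetI singletonI)
  also have "\<dots> = A $$ (x, ?z) * B $$ (?z, y)"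
  proof (cases "?z \<in> middle_indices m S T x y")
    case False
    then have "\<not> agree_outside S x ?z \<or> \<not> agree_outside T ?z y"
      by (simp add: middle_indices_def splice_less)
    then show ?thesis using False acts_on_zero[OF A] acts_on_zero[OF B] xy splice_less by auto
  qed simp
  finally show ?thesis .
qed

lemma diag_entry_mult_disjoint:
  assumes A: "acts_on m S A" and B: "acts_on m T B" and ST: "S \<inter> T = {}" and x: "x < 2^m"
  shows "(A * B) $$ (x,x) = A $$ (x,x) * B $$ (x,x)"
proof -
  have "splice m S x x = x"
    using x bit_nat_less_pow2[of x m] by (intro bit_eqI) (auto simp: bit_splice)
  then show ?thesis using mult_entry_disjoint[OF A B ST x x] by simp
qed

lemma acts_on_disjoint_commute:
  assumes A: "acts_on m S A" and B: "acts_on m T B" and ST: "S \<inter> T = {}"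
  shows "A * B = B * A"
proof (rule eq_matI)
  have cA: "A \<in> carrier_mat (2^m) (2^m)" and cB: "B \<in> carrier_mat (2^m) (2^m)"
    using acts_on_carrier A B by auto
  then show "dim_row (A * B) = dim_row (B * A)" "dim_col (A * B) = dim_col (B * A)" by auto
  fix x y assume "x < dim_row (B * A)" "y < dim_col (B * A)"
  then have xy: "x < 2^m" "y < 2^m" using cA cB by auto
  show "(A * B) $$ (x,y) = (B * A) $$ (x,y)"
  proof (cases "agree_outside (S \<union> T) x y")
    case False
    then show ?thesis
      using acts_on_zero[OF acts_on_mult[OF A B]] acts_on_zero[OF acts_on_mult[OF B A]] xy
      by (simp add: Un_commute)
  next
    case True
    let ?z = "splice m S y x" and ?w = "splice m T y x"
    have TS: "T \<inter> S = {}" using ST by auto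
    have "A $$ (x, ?z) = A $$ (?w, y)"
      by (rule acts_on_eq[OF A]) (use xy True ST bit_nat_less_pow2[of x m] bit_nat_less_pow2[of y m] in
          \<open>auto simp: agree_outside_def agree_on_def bit_splice splice_less\<close>)
    moreover have "B $$ (?z, y) = B $$ (x, ?w)"
      by (rule acts_on_eq[OF B]) (use xy True ST bit_nat_less_pow2[of x m] bit_nat_less_pow2[of y m] in
          \<open>auto simp: agree_outside_def agree_on_def bit_splice splice_less\<close>)
    ultimately show ?thesis
      using mult_entry_disjoint[OF A B ST xy] mult_entry_disjoint[OF B A TS xy] by simp
  qed
qed

lemma conj_acts_on_disjoint:
  assumes M: "acts_on m S M" and V: "acts_on m G V" and SG: "S \<inter> G = {}"
    and u: "adj V * V = 1\<^sub>m (2^m)"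
  shows "adj V * M * V = M"
proof -
  have cM: "M \<in> carrier_mat (2^m) (2^m)" and cV: "V \<in> carrier_mat (2^m) (2^m)"
    using acts_on_carrier M V by auto
  have cV': "adj V \<in> carrier_mat (2^m) (2^m)" using adj_carrier[OF cV] .
  have "adj V * M * V = adj V * (V * M)"
    using cM cV cV' acts_on_disjoint_commute[OF M V SG] by simp
  also have "\<dots> = (adj V * V) * M" using cM cV cV' by simp
  finally show ?thesis using u cM by simp
qed

lemma conj_acts_on:
  assumes M: "acts_on m S M" and V: "acts_on m G V"
  shows "acts_on m (S \<union> G) (adj V * M * V)"
  using acts_on_mono[OF acts_on_mult[OF acts_on_mult[OF acts_on_adj[OF V] M] V]] by auto

definition diag_op :: "nat \<Rightarrow> (nat \<Rightarrow> complex) \<Rightarrow> complex mat" where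
  "diag_op m f = mat (2^m) (2^m) (\<lambda>(i,j). if i = j then f i else 0)"

lemma diag_op_carrier: "diag_op m f \<in> carrier_mat (2^m) (2^m)"
  by (simp add: diag_op_def)

lemma acts_on_diag_op:
  assumes "\<And>i i'. i < 2^m \<Longrightarrow> i' < 2^m \<Longrightarrow> agree_on S i i' \<Longrightarrow> f i = f i'"
  shows "acts_on m S (diag_op m f)"
proof (rule acts_onI)
  fix x y x' y' :: nat assume "x < 2^m" "y < 2^m" "x' < 2^m" "y' < 2^m"
    and a: "agree_outside S x y" "agree_outside S x' y'" "agree_on S x x'" "agree_on S y y'"
  moreover have "x = y \<longleftrightarrow> x' = y'"
    using a agree_outside_agree_on_eq unfolding agree_outside_def agree_on_def by metis
  ultimately show "diag_op m f $$ (x,y) = diag_op m f $$ (x',y')"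
    using assms[of x x'] by (auto simp: diag_op_def)
qed (auto simp: diag_op_def agree_outside_def)

lemma diag_op_mult: "diag_op m f * diag_op m g = diag_op m (\<lambda>i. f i * g i)"
proof (rule eq_matI)
  fix i j assume "i < dim_row (diag_op m (\<lambda>i. f i * g i))" "j < dim_col (diag_op m (\<lambda>i. f i * g i))"
  then have i: "i < 2^m" and j: "j < 2^m" by (auto simp: diag_op_def)
  have "(diag_op m f * diag_op m g) $$ (i,j) = (\<Sum>z<2^m. diag_op m f $$ (i,z) * diag_op m g $$ (z,j))"
    by (rule mult_entry[OF diag_op_carrier diag_op_carrier i j])
  also have "\<dots> = diag_op m f $$ (i,i) * diag_op m g $$ (i,j)"
    by (rule sum_eq_single) (use i j in \<open>auto simp: diag_op_def\<close>)
  finally show "(diag_op m f * diag_op m g) $$ (i,j) = diag_op m (\<lambda>i. f i * g i) $$ (i,j)"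
    using i j by (auto simp: diag_op_def)
qed (auto simp: diag_op_def)

definition pauli_z :: "nat \<Rightarrow> nat \<Rightarrow> complex mat" where
  "pauli_z m q = diag_op m (\<lambda>i. if bit i q then -1 else 1)"

lemma pauli_z_carrier: "pauli_z m q \<in> carrier_mat (2^m) (2^m)"
  by (simp add: pauli_z_def diag_op_carrier)

lemma acts_on_pauli_z: "acts_on m {q} (pauli_z m q)"
  unfolding pauli_z_def by (rule acts_on_diag_op) (auto simp: agree_on_def)

lemma unitary_pauli_z: "is_unitary (2^m) (pauli_z m q)"
proof -
  have "adj (pauli_z m q) = pauli_z m q"
    by (rule eq_matI) (auto simp: pauli_z_def diag_op_def adj_def)
  moreover have "pauli_z m q * pauli_z m q = 1\<^sub>m (2^m)"
    unfolding pauli_z_def diag_op_mult by (rule eq_matI) (auto simp: diag_op_def)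
  ultimately show ?thesis unfolding is_unitary_def using pauli_z_carrier by simp
qed

lemma qbit_eq_of_bool_bit: "qbit k x = of_bool (bit x k)"
  by (simp add: qbit_def bit_iff_odd odd_iff_mod_2_eq_one)

lemma qubit_condition_iff_agree_outside:
  assumes "x < 2^m" "y < 2^m"
  shows "(\<forall>k<m. k \<notin> G \<longrightarrow> qbit k x = qbit k y) \<longleftrightarrow> agree_outside G x y"
  using assms bit_nat_less_pow2[of x m] bit_nat_less_pow2[of y m]
  unfolding agree_outside_def qbit_eq_of_bool_bit by (metis of_bool_eq_iff)

lemma loc_index_eq_horner_sum: "loc_index qs z = horner_sum of_bool 2 (rev (map (bit z) qs))"
proof -
  let ?k = "length qs"
  have "loc_index qs z = (\<Sum>t<?k. of_bool (bit z (qs ! t)) * 2 ^ (?k - 1 - t))"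
    unfolding loc_index_def qbit_eq_of_bool_bit ..
  also have "\<dots> = (\<Sum>i<?k. of_bool (bit z (qs ! (?k - Suc i))) * 2 ^ (?k - 1 - (?k - Suc i)))"
    by (rule sum.nat_diff_reindex[symmetric])
  also have "\<dots> = (\<Sum>i<?k. of_bool (bit z (qs ! (?k - Suc i))) * 2 ^ i)"
    by (intro sum.cong) auto
  also have "\<dots> = horner_sum of_bool 2 (rev (map (bit z) qs))"
    by (simp add: horner_sum_eq_sum rev_nth lessThan_atLeast0)
  finally show ?thesis .
qed

lemma bit_loc_index: "bit (loc_index qs z) i \<longleftrightarrow> i < length qs \<and> bit z (qs ! (length qs - Suc i))"
  unfolding loc_index_eq_horner_sum by (auto simp: bit_horner_sum_bit_iff rev_nth)

lemma loc_index_less: "loc_index qs z < 2 ^ length qs"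
  by (rule nat_less_pow2_if_bits) (simp add: bit_loc_index)

lemma loc_index_cong: "agree_on (set qs) x x' \<Longrightarrow> loc_index qs x = loc_index qs x'"
  unfolding loc_index_def by (auto simp: agree_on_def qbit_eq_of_bool_bit intro!: sum.cong)

definition qubit_pos :: "nat list \<Rightarrow> nat \<Rightarrow> nat" where
  "qubit_pos qs q = (THE t. t < length qs \<and> qs ! t = q)"

lemma qubit_pos_nth: "distinct qs \<Longrightarrow> t < length qs \<Longrightarrow> qubit_pos qs (qs ! t) = t"
  unfolding qubit_pos_def by (rule the_equality) (auto simp: nth_eq_iff_index_eq)

lemma qubit_pos: "distinct qs \<Longrightarrow> q \<in> set qs \<Longrightarrow> qubit_pos qs q < length qs \<and> qs ! qubit_pos qs q = q"
  by (metis qubit_pos_nth in_set_conv_nth)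

text \<open>The inverse of \<open>loc_index qs\<close> on the basis indices that agree with \<open>x\<close> outside \<open>qs\<close>:
  qubit \<open>qs ! t\<close> receives the bit of \<open>j\<close> at position \<open>length qs - 1 - t\<close>.\<close>

definition place_local :: "nat \<Rightarrow> nat list \<Rightarrow> nat \<Rightarrow> nat \<Rightarrow> nat" where
  "place_local m qs x j = horner_sum of_bool 2
     (map (\<lambda>q. if q \<in> set qs then bit j (length qs - Suc (qubit_pos qs q)) else bit x q) [0..<m])"

lemma bit_place_local:
  "bit (place_local m qs x j) q \<longleftrightarrow>
     q < m \<and> (if q \<in> set qs then bit j (length qs - Suc (qubit_pos qs q)) else bit x q)"
  by (auto simp: place_local_def bit_horner_sum_bit_iff)

lemma place_local_less: "place_local m qs x j < 2^m"
  by (rule nat_less_pow2_if_bits) (simp add: bit_place_local)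

lemma agree_outside_place_local: "x < 2^m \<Longrightarrow> agree_outside (set qs) x (place_local m qs x j)"
  using bit_nat_less_pow2[of x m] by (auto simp: agree_outside_def bit_place_local)

lemma place_local_loc_index:
  assumes "distinct qs" "set qs \<subseteq> {..<m}" "x < 2^m" "z < 2^m" "agree_outside (set qs) x z"
  shows "place_local m qs x (loc_index qs z) = z"
proof (rule bit_eqI)
  fix q
  show "bit (place_local m qs x (loc_index qs z)) q = bit z q"
  proof (cases "q \<in> set qs")
    case True
    then have "qubit_pos qs q < length qs" "qs ! qubit_pos qs q = q" using qubit_pos assms(1) by auto
    then show ?thesis using True assms(2) by (auto simp: bit_place_local bit_loc_index)
  next
    case False
    then show ?thesis using assms(3-5) bit_nat_less_pow2[of z m q] bit_nat_less_pow2[of x m q]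
      by (auto simp: bit_place_local agree_outside_def)
  qed
qed

lemma loc_index_place_local:
  assumes "distinct qs" "set qs \<subseteq> {..<m}" "j < 2 ^ length qs"
  shows "loc_index qs (place_local m qs x j) = j"
proof (rule bit_eqI)
  fix i
  let ?k = "length qs"
  show "bit (loc_index qs (place_local m qs x j)) i = bit j i"
  proof (cases "i < ?k")
    case True
    then have "qs ! (?k - Suc i) \<in> set qs" "qubit_pos qs (qs ! (?k - Suc i)) = ?k - Suc i"
      using qubit_pos_nth[OF assms(1)] by auto
    moreover from this(1) have "qs ! (?k - Suc i) < m" using assms(2) by blast
    ultimately show ?thesis using True by (auto simp: bit_loc_index bit_place_local)
  next
    case False
    then show ?thesis using assms(3) bit_nat_less_pow2[of j ?k i] by (auto simp: bit_loc_index)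
  qed
qed

lemma bij_betw_loc_index:
  assumes "distinct qs" "set qs \<subseteq> {..<m}" "x < 2^m"
  shows "bij_betw (loc_index qs) {z. z < 2^m \<and> agree_outside (set qs) x z} {..<2 ^ length qs}"
  by (rule bij_betw_byWitness[where f' = "place_local m qs x"])
    (use assms in \<open>auto simp: place_local_loc_index loc_index_place_local loc_index_less
       place_local_less agree_outside_place_local\<close>)

lemma valid_gateD:
  assumes "valid_gate m g"
  shows "length (fst g) = 1 \<or> length (fst g) = 2" "distinct (fst g)" "set (fst g) \<subseteq> {..<m}"
    "is_unitary (2 ^ length (fst g)) (snd g)"
  using assms unfolding valid_gate_def Let_def by auto

lemma embed_gate_carrier: "embed_gate m g \<in> carrier_mat (2^m) (2^m)"
  by (simp add: embed_gate_def)

lemma embed_gate_entry: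
  assumes "x < 2^m" "y < 2^m"
  shows "embed_gate m g $$ (x,y) = (if agree_outside (set (fst g)) x y
     then snd g $$ (loc_index (fst g) x, loc_index (fst g) y) else 0)"
  using assms qubit_condition_iff_agree_outside[OF assms] unfolding embed_gate_def by simp

lemma acts_on_embed_gate: "acts_on m (set (fst g)) (embed_gate m g)"
  by (rule acts_onI) (auto simp: embed_gate_carrier embed_gate_entry loc_index_cong)

lemma adj_mult_embed_gate_entry:
  assumes g: "valid_gate m g" and xy: "x < 2^m" "y < 2^m" "agree_outside (set (fst g)) x y"
  shows "(adj (embed_gate m g) * embed_gate m g) $$ (x,y)
    = (adj (snd g) * snd g) $$ (loc_index (fst g) x, loc_index (fst g) y)"
proof -
  obtain qs U where g_eq: "g = (qs, U)" by (cases g)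
  let ?E = "embed_gate m g" and ?G = "{z. z < 2^m \<and> agree_outside (set qs) x z}"
  have cU: "U \<in> carrier_mat (2 ^ length qs) (2 ^ length qs)"
    using valid_gateD(4)[OF g] g_eq by (simp add: is_unitary_def)
  have "(adj ?E * ?E) $$ (x,y) = (\<Sum>z<2^m. cnj (?E $$ (z,x)) * ?E $$ (z,y))"
    using mult_entry[OF adj_carrier[OF embed_gate_carrier] embed_gate_carrier xy(1,2)] xy
    by (simp add: embed_gate_carrier[THEN carrier_matD(1)] embed_gate_carrier[THEN carrier_matD(2)])
  also have "\<dots> = (\<Sum>z\<in>?G. cnj (?E $$ (z,x)) * ?E $$ (z,y))"
    by (rule sum.mono_neutral_right) (use xy g_eq agree_outside_sym in \<open>auto simp: embed_gate_entry\<close>)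
  also have "\<dots> = (\<Sum>z\<in>?G. cnj (U $$ (loc_index qs z, loc_index qs x)) * U $$ (loc_index qs z, loc_index qs y))"
  proof (rule sum.cong[OF refl])
    fix z assume z: "z \<in> ?G"
    then have zx: "agree_outside (set qs) z x" using agree_outside_sym by auto
    have zy: "agree_outside (set qs) z y" using agree_outside_trans[OF zx] xy(3) g_eq by simp
    then show "cnj (?E $$ (z,x)) * ?E $$ (z,y)
      = cnj (U $$ (loc_index qs z, loc_index qs x)) * U $$ (loc_index qs z, loc_index qs y)"
      using z zx zy xy g_eq by (simp add: embed_gate_entry)
  qed
  also have "\<dots> = (\<Sum>j<2 ^ length qs. cnj (U $$ (j, loc_index qs x)) * U $$ (j, loc_index qs y))"
    using valid_gateD(2,3)[OF g] g_eq xy(1)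
    by (intro sum.reindex_bij_betw[OF bij_betw_loc_index]) auto
  also have "\<dots> = (adj U * U) $$ (loc_index qs x, loc_index qs y)"
    using mult_entry[OF adj_carrier[OF cU] cU loc_index_less loc_index_less] cU loc_index_less[of qs]
    by (auto intro!: sum.cong)
  finally show ?thesis using g_eq by simp
qed


lemma unitary_embed_gate:
  assumes g: "valid_gate m g"
  shows "is_unitary (2^m) (embed_gate m g)"
proof -
  obtain qs U where g_eq: "g = (qs, U)" by (cases g)
  let ?E = "embed_gate m g"
  have UU: "adj U * U = 1\<^sub>m (2 ^ length qs)"
    using valid_gateD(4)[OF g] g_eq by (simp add: is_unitary_def)
  have "adj ?E * ?E = 1\<^sub>m (2^m)"
  proof (rule eq_matI)
    fix x y assume "x < dim_row (1\<^sub>m (2^m))" "y < dim_col (1\<^sub>m (2^m))"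
    then have xy: "x < 2^m" "y < 2^m" by auto
    show "(adj ?E * ?E) $$ (x,y) = 1\<^sub>m (2^m) $$ (x,y)"
    proof (cases "agree_outside (set qs) x y")
      case True
      have "x \<in> {z. z < 2^m \<and> agree_outside (set qs) x z}" "y \<in> {z. z < 2^m \<and> agree_outside (set qs) x z}"
        using xy True by (auto simp: agree_outside_def)
      then have "loc_index qs x = loc_index qs y \<longleftrightarrow> x = y"
        using bij_betw_imp_inj_on[OF bij_betw_loc_index] valid_gateD(2,3)[OF g] g_eq xy
        by (auto dest: inj_onD)
      then show ?thesis
        using adj_mult_embed_gate_entry[OF g xy] True UU loc_index_less[of qs] g_eq xy by simp
    next
      case False
      then have "x \<noteq> y" by (auto simp: agree_outside_def)
      moreover have "acts_on m (set (fst g) \<union> set (fst g)) (adj ?E * ?E)"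
        by (rule acts_on_mult[OF acts_on_adj[OF acts_on_embed_gate] acts_on_embed_gate])
      ultimately show ?thesis using acts_on_zero False xy g_eq by fastforce
    qed
  qed (simp_all add: embed_gate_carrier[THEN carrier_matD(2)])
  then show ?thesis using embed_gate_carrier unfolding is_unitary_def by simp
qed

lemma valid_layer_Cons:
  assumes "valid_layer m (g # L)"
  shows "valid_gate m g" "valid_layer m L" "\<And>h. h \<in> set L \<Longrightarrow> set (fst g) \<inter> set (fst h) = {}"
proof -
  show "valid_gate m g" using assms unfolding valid_layer_def by auto
  show "valid_layer m L" unfolding valid_layer_def
  proof (intro conjI allI impI ballI)
    fix h assume "h \<in> set L" then show "valid_gate m h" using assms unfolding valid_layer_def by auto
  next
    fix i j assume ij: "i < length L" "j < length L" "i \<noteq> j"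
    then have "set (fst ((g#L) ! Suc i)) \<inter> set (fst ((g#L) ! Suc j)) = {}"
      using assms unfolding valid_layer_def by (metis Suc_inject Suc_less_eq length_Cons)
    then show "set (fst (L ! i)) \<inter> set (fst (L ! j)) = {}" by simp
  qed
  fix h assume "h \<in> set L"
  then obtain j where j: "j < length L" "L ! j = h" by (auto simp: in_set_conv_nth)
  then have "set (fst ((g#L) ! 0)) \<inter> set (fst ((g#L) ! Suc j)) = {}"
    using assms unfolding valid_layer_def by (metis Suc_less_eq length_Cons nat.distinct(1) zero_less_Suc)
  then show "set (fst g) \<inter> set (fst h) = {}" using j by simp
qed

lemma valid_layer_gate_unique:
  assumes L: "valid_layer m L" and gh: "g \<in> set L" "h \<in> set L" "q \<in> set (fst g)" "q \<in> set (fst h)"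
  shows "g = h"
proof -
  obtain i j where "i < length L" "L ! i = g" "j < length L" "L ! j = h"
    using gh(1,2) by (auto simp: in_set_conv_nth)
  with L gh(3,4) show ?thesis unfolding valid_layer_def by blast
qed

lemma layer_mat_Cons: "layer_mat m (g # L) = embed_gate m g * layer_mat m L"
  by (simp add: layer_mat_def)

lemma layer_mat_carrier: "layer_mat m L \<in> carrier_mat (2^m) (2^m)"
proof (induction L)
  case Nil then show ?case by (simp add: layer_mat_def)
next
  case (Cons g L) then show ?case unfolding layer_mat_Cons using mult_carrier_mat[OF embed_gate_carrier] by blast
qed

lemma unitary_layer_mat: "valid_layer m L \<Longrightarrow> is_unitary (2^m) (layer_mat m L)"
proof (induction L)
  case Nil then show ?case by (simp add: layer_mat_def unitary_one)
next
  case (Cons g L)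
  show ?case unfolding layer_mat_Cons
    using unitary_mult[OF unitary_embed_gate Cons.IH] valid_layer_Cons[OF Cons.prems] by blast
qed

definition layer_nbhd :: "layer \<Rightarrow> nat set \<Rightarrow> nat set" where
  "layer_nbhd L S = S \<union> \<Union>{set (fst g) | g. g \<in> set L \<and> set (fst g) \<inter> S \<noteq> {}}"

lemma layer_nbhd_Nil [simp]: "layer_nbhd [] S = S"
  by (simp add: layer_nbhd_def)

lemma mem_layer_nbhd_iff:
  "q \<in> layer_nbhd L S \<longleftrightarrow> q \<in> S \<or> (\<exists>g\<in>set L. q \<in> set (fst g) \<and> set (fst g) \<inter> S \<noteq> {})"
  unfolding layer_nbhd_def by blast

lemma layer_nbhd_subset_Cons: "layer_nbhd L S \<subseteq> layer_nbhd (g # L) S"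
  by (auto simp: mem_layer_nbhd_iff)

lemma layer_nbhd_Cons_absorb:
  assumes "set (fst g) \<inter> S \<noteq> {}" "\<forall>h\<in>set L. set (fst g) \<inter> set (fst h) = {}"
  shows "layer_nbhd L (S \<union> set (fst g)) \<subseteq> layer_nbhd (g # L) S"
  using assms unfolding mem_layer_nbhd_iff subset_iff by (auto 0 3)

lemma layer_nbhd_Cons_absorb':
  assumes "set (fst g) \<inter> layer_nbhd L S \<noteq> {}" "\<forall>h\<in>set L. set (fst g) \<inter> set (fst h) = {}"
  shows "layer_nbhd L S \<union> set (fst g) \<subseteq> layer_nbhd (g # L) S"
proof -
  obtain t where t: "t \<in> set (fst g)" "t \<in> layer_nbhd L S" using assms(1) by blast
  then have "t \<in> S" using assms(2) unfolding mem_layer_nbhd_iff by blast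
  with t(1) show ?thesis by (auto simp: mem_layer_nbhd_iff)
qed

lemma acts_on_conj_layer:
  assumes "valid_layer m L" "acts_on m S M"
  shows "acts_on m (layer_nbhd L S) (adj (layer_mat m L) * M * layer_mat m L)"
  using assms
proof (induction L arbitrary: S M)
  case Nil
  then show ?case using acts_on_carrier[OF Nil.prems(2)] by (simp add: layer_mat_def)
next
  case (Cons g L)
  let ?E = "embed_gate m g" and ?L = "layer_mat m L" and ?G = "set (fst g)"
  have g: "valid_gate m g" and L: "valid_layer m L" and disj: "\<forall>h\<in>set L. ?G \<inter> set (fst h) = {}"
    using valid_layer_Cons[OF Cons.prems(1)] by auto
  have cM: "M \<in> carrier_mat (2^m) (2^m)" using acts_on_carrier[OF Cons.prems(2)] .
  have cE: "?E \<in> carrier_mat (2^m) (2^m)" and cL: "?L \<in> carrier_mat (2^m) (2^m)"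
    by (rule embed_gate_carrier layer_mat_carrier)+
  have split: "adj (?E * ?L) * M * (?E * ?L) = adj ?L * (adj ?E * M * ?E) * ?L"
    using cE cL cM adj_carrier[OF cE] adj_carrier[OF cL]
    by (simp add: adj_mult[OF cE cL] assoc_mult_mat[of _ "2^m" "2^m" _ "2^m" _ "2^m"])
  show ?case
  proof (cases "?G \<inter> S = {}")
    case True
    have "adj ?E * M * ?E = M"
      using conj_acts_on_disjoint[OF Cons.prems(2) acts_on_embed_gate[of m g]] True unitary_embed_gate[OF g]
      by (auto simp: is_unitary_def)
    then show ?thesis
      using acts_on_mono[OF Cons.IH[OF L Cons.prems(2)] layer_nbhd_subset_Cons]
      unfolding layer_mat_Cons split by simp
  next
    case False
    have "acts_on m (layer_nbhd L (S \<union> ?G)) (adj ?L * (adj ?E * M * ?E) * ?L)"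
      by (rule Cons.IH[OF L conj_acts_on[OF Cons.prems(2) acts_on_embed_gate]])
    then show ?thesis
      unfolding layer_mat_Cons split by (rule acts_on_mono[OF _ layer_nbhd_Cons_absorb[OF False disj]])
  qed
qed

lemma acts_on_conj_adj_layer:
  assumes "valid_layer m L" "acts_on m S M"
  shows "acts_on m (layer_nbhd L S) (layer_mat m L * M * adj (layer_mat m L))"
  using assms
proof (induction L arbitrary: S M)
  case Nil
  then show ?case using acts_on_carrier[OF Nil.prems(2)] by (simp add: layer_mat_def)
next
  case (Cons g L)
  let ?E = "embed_gate m g" and ?L = "layer_mat m L" and ?G = "set (fst g)"
  have g: "valid_gate m g" and L: "valid_layer m L" and disj: "\<forall>h\<in>set L. ?G \<inter> set (fst h) = {}"
    using valid_layer_Cons[OF Cons.prems(1)] by auto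
  have cM: "M \<in> carrier_mat (2^m) (2^m)" using acts_on_carrier[OF Cons.prems(2)] .
  have cE: "?E \<in> carrier_mat (2^m) (2^m)" and cL: "?L \<in> carrier_mat (2^m) (2^m)"
    by (rule embed_gate_carrier layer_mat_carrier)+
  have split: "(?E * ?L) * M * adj (?E * ?L) = adj (adj ?E) * (?L * M * adj ?L) * adj ?E"
    using cE cL cM adj_carrier[OF cE] adj_carrier[OF cL]
    by (simp add: adj_mult[OF cE cL] assoc_mult_mat[of _ "2^m" "2^m" _ "2^m" _ "2^m"])
  have IH: "acts_on m (layer_nbhd L S) (?L * M * adj ?L)" by (rule Cons.IH[OF L Cons.prems(2)])
  have E: "acts_on m ?G (adj ?E)" by (rule acts_on_adj[OF acts_on_embed_gate])
  show ?case
  proof (cases "?G \<inter> layer_nbhd L S = {}")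
    case True
    have "adj (adj ?E) * (?L * M * adj ?L) * adj ?E = ?L * M * adj ?L"
      using conj_acts_on_disjoint[OF IH E] True unitary_mult_adj[OF unitary_embed_gate[OF g]] by auto
    then show ?thesis using acts_on_mono[OF IH layer_nbhd_subset_Cons] unfolding layer_mat_Cons split by simp
  next
    case False
    show ?thesis
      using acts_on_mono[OF conj_acts_on[OF IH E] layer_nbhd_Cons_absorb'[OF False disj]]
      unfolding layer_mat_Cons split by simp
  qed
qed

lemma circuit_mat_snoc: "circuit_mat m (C @ [L]) = layer_mat m L * circuit_mat m C"
  by (simp add: circuit_mat_def)

lemma circuit_mat_carrier: "circuit_mat m C \<in> carrier_mat (2^m) (2^m)"
proof (induction C rule: rev_induct)
  case Nil then show ?case by (simp add: circuit_mat_def)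
next
  case (snoc L C)
  then show ?case unfolding circuit_mat_snoc using mult_carrier_mat[OF layer_mat_carrier] by blast
qed

lemma unitary_circuit_mat: "valid_circuit m C \<Longrightarrow> is_unitary (2^m) (circuit_mat m C)"
proof (induction C rule: rev_induct)
  case Nil then show ?case by (simp add: circuit_mat_def unitary_one)
next
  case (snoc L C)
  then have "valid_layer m L" "valid_circuit m C" by (auto simp: valid_circuit_def)
  then show ?case unfolding circuit_mat_snoc using snoc.IH unitary_mult unitary_layer_mat by blast
qed

definition backward_cone :: "circuit \<Rightarrow> nat set \<Rightarrow> nat set" where
  "backward_cone C S = foldr layer_nbhd C S"

definition forward_cone :: "circuit \<Rightarrow> nat set \<Rightarrow> nat set" where
  "forward_cone C S = foldl (\<lambda>T L. layer_nbhd L T) S C"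

lemma acts_on_conj_circuit:
  assumes "valid_circuit m C" "acts_on m S M"
  shows "acts_on m (backward_cone C S) (adj (circuit_mat m C) * M * circuit_mat m C)"
  using assms
proof (induction C arbitrary: S M rule: rev_induct)
  case Nil
  then show ?case using acts_on_carrier[OF Nil.prems(2)] by (simp add: circuit_mat_def backward_cone_def)
next
  case (snoc L C)
  let ?L = "layer_mat m L" and ?W = "circuit_mat m C"
  have L: "valid_layer m L" and C: "valid_circuit m C" using snoc.prems by (auto simp: valid_circuit_def)
  have cM: "M \<in> carrier_mat (2^m) (2^m)" using acts_on_carrier[OF snoc.prems(2)] .
  have cL: "?L \<in> carrier_mat (2^m) (2^m)" and cW: "?W \<in> carrier_mat (2^m) (2^m)"
    by (rule layer_mat_carrier circuit_mat_carrier)+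
  have "adj (?L * ?W) * M * (?L * ?W) = adj ?W * (adj ?L * M * ?L) * ?W"
    using cL cW cM adj_carrier[OF cL] adj_carrier[OF cW]
    by (simp add: adj_mult[OF cL cW] assoc_mult_mat[of _ "2^m" "2^m" _ "2^m" _ "2^m"])
  then show ?case
    using snoc.IH[OF C acts_on_conj_layer[OF L snoc.prems(2)]]
    by (simp add: circuit_mat_snoc backward_cone_def)
qed

lemma acts_on_conj_adj_circuit:
  assumes "valid_circuit m C" "acts_on m S M"
  shows "acts_on m (forward_cone C S) (circuit_mat m C * M * adj (circuit_mat m C))"
  using assms
proof (induction C arbitrary: S M rule: rev_induct)
  case Nil
  then show ?case using acts_on_carrier[OF Nil.prems(2)] by (simp add: circuit_mat_def forward_cone_def)
next
  case (snoc L C)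
  let ?L = "layer_mat m L" and ?W = "circuit_mat m C"
  have L: "valid_layer m L" and C: "valid_circuit m C" using snoc.prems by (auto simp: valid_circuit_def)
  have cM: "M \<in> carrier_mat (2^m) (2^m)" using acts_on_carrier[OF snoc.prems(2)] .
  have cL: "?L \<in> carrier_mat (2^m) (2^m)" and cW: "?W \<in> carrier_mat (2^m) (2^m)"
    by (rule layer_mat_carrier circuit_mat_carrier)+
  have "(?L * ?W) * M * adj (?L * ?W) = ?L * (?W * M * adj ?W) * adj ?L"
    using cL cW cM adj_carrier[OF cL] adj_carrier[OF cW]
    by (simp add: adj_mult[OF cL cW] assoc_mult_mat[of _ "2^m" "2^m" _ "2^m" _ "2^m"])
  then show ?case
    using acts_on_conj_adj_layer[OF L snoc.IH[OF C snoc.prems(2)]]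
    by (simp add: circuit_mat_snoc forward_cone_def)
qed

text \<open>The backward cone of \<open>S\<close> meets \<open>T\<close> iff \<open>S\<close> meets the forward cone of \<open>T\<close>: both say that
  some path through the gates connects \<open>S\<close> and \<open>T\<close>.\<close>

lemma layer_nbhd_meets_iff: "layer_nbhd L S \<inter> T \<noteq> {} \<longleftrightarrow> S \<inter> layer_nbhd L T \<noteq> {}"
  unfolding ex_in_conv[symmetric] mem_layer_nbhd_iff Int_iff by blast

lemma backward_cone_meets_iff: "backward_cone C S \<inter> T \<noteq> {} \<longleftrightarrow> S \<inter> forward_cone C T \<noteq> {}"
  by (induction C arbitrary: T) (simp_all add: backward_cone_def forward_cone_def layer_nbhd_meets_iff)

lemma card_layer_nbhd:
  assumes L: "valid_layer m L" and "finite S"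
  shows "finite (layer_nbhd L S) \<and> card (layer_nbhd L S) \<le> 2 * card S"
proof -
  define P where "P s = {s} \<union> \<Union>{set (fst g) | g. g \<in> set L \<and> s \<in> set (fst g)}" for s
  have eq: "layer_nbhd L S = (\<Union>s\<in>S. P s)" unfolding P_def layer_nbhd_def by blast
  have P: "finite (P s) \<and> card (P s) \<le> 2" for s
  proof (cases "\<exists>g\<in>set L. s \<in> set (fst g)")
    case True
    then obtain g where g: "g \<in> set L" "s \<in> set (fst g)" by auto
    then have "P s = set (fst g)"
      using valid_layer_gate_unique[OF L g(1)] unfolding P_def by blast
    moreover have "length (fst g) \<le> 2"
      using valid_gateD(1)[of m g] L g(1) unfolding valid_layer_def by auto
    ultimately show ?thesis using card_length[of "fst g"] by simp
  next
    case False
    then have "P s = {s}" unfolding P_def by auto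
    then show ?thesis by simp
  qed
  have "card (layer_nbhd L S) \<le> (\<Sum>s\<in>S. card (P s))" unfolding eq by (rule card_UN_le[OF \<open>finite S\<close>])
  also have "\<dots> \<le> 2 * card S" using sum_mono[of S "\<lambda>s. card (P s)" "\<lambda>_. 2"] P by simp
  finally show ?thesis unfolding eq using \<open>finite S\<close> P by blast
qed

lemma card_backward_cone:
  assumes "valid_circuit m C" "finite S"
  shows "finite (backward_cone C S) \<and> card (backward_cone C S) \<le> 2 ^ length C * card S"
  using assms
proof (induction C)
  case Nil then show ?case by (simp add: backward_cone_def)
next
  case (Cons L C)
  have L: "valid_layer m L" and C: "valid_circuit m C" using Cons.prems by (auto simp: valid_circuit_def)
  then show ?case using card_layer_nbhd[OF L] Cons.IH[OF C Cons.prems(2)]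
    by (fastforce simp: backward_cone_def)
qed

lemma card_forward_cone:
  assumes "valid_circuit m C" "finite S"
  shows "finite (forward_cone C S) \<and> card (forward_cone C S) \<le> 2 ^ length C * card S"
  using assms
proof (induction C arbitrary: S)
  case Nil then show ?case by (simp add: forward_cone_def)
next
  case (Cons L C)
  have L: "valid_layer m L" and C: "valid_circuit m C" using Cons.prems by (auto simp: valid_circuit_def)
  have nb: "finite (layer_nbhd L S)" "card (layer_nbhd L S) \<le> 2 * card S"
    using card_layer_nbhd[OF L Cons.prems(2)] by auto
  have "forward_cone (L # C) S = forward_cone C (layer_nbhd L S)" by (simp add: forward_cone_def)
  moreover have "card (forward_cone C (layer_nbhd L S)) \<le> 2 ^ length C * (2 * card S)"
    using Cons.IH[OF C nb(1)] nb(2) by (meson mult_le_mono2 order_trans)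
  ultimately show ?case using Cons.IH[OF C nb(1)] by (simp add: mult_ac)
qed

definition cinner :: "complex vec \<Rightarrow> complex vec \<Rightarrow> complex" where
  "cinner u w = (\<Sum>i<dim_vec u. cnj (u $ i) * w $ i)"

definition sq_norm :: "complex vec \<Rightarrow> real" where
  "sq_norm v = (\<Sum>i<dim_vec v. (cmod (v $ i))\<^sup>2)"

definition expect :: "complex vec \<Rightarrow> complex mat \<Rightarrow> complex" where
  "expect v M = cinner v (M *\<^sub>v v)"

definition frobenius_sq :: "complex mat \<Rightarrow> real" where
  "frobenius_sq A = (\<Sum>i<dim_row A. \<Sum>j<dim_col A. (cmod (A $$ (i,j)))\<^sup>2)"

lemma sq_norm_nonneg: "sq_norm v \<ge> 0"
  unfolding sq_norm_def by (intro sum_nonneg) auto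

lemma cnj_mult_self: "cnj z * z = complex_of_real ((cmod z)\<^sup>2)"
  using complex_norm_square[of z] by (simp add: mult.commute)

lemma cinner_self: "cinner v v = of_real (sq_norm v)"
  unfolding cinner_def sq_norm_def by (simp add: cnj_mult_self)

lemma cinner_commute: "dim_vec w = dim_vec u \<Longrightarrow> cinner w u = cnj (cinner u w)"
  unfolding cinner_def by (simp add: mult.commute)

lemma mult_mat_vec_entry:
  assumes "W \<in> carrier_mat n k" "v \<in> carrier_vec k" "a < n"
  shows "(W *\<^sub>v v) $ a = (\<Sum>i<k. W $$ (a,i) * v $ i)"
  using assms by (auto simp: scalar_prod_def lessThan_atLeast0 intro!: sum.cong)

lemma cinner_diff_left:
  assumes "u \<in> carrier_vec n" "v \<in> carrier_vec n" "w \<in> carrier_vec n"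
  shows "cinner (u - v) w = cinner u w - cinner v w"
  using assms unfolding cinner_def by (simp add: sum_subtractf[symmetric] algebra_simps)

lemma cinner_diff_right:
  assumes "u \<in> carrier_vec n" "v \<in> carrier_vec n" "w \<in> carrier_vec n"
  shows "cinner u (v - w) = cinner u v - cinner u w"
  using assms unfolding cinner_def by (simp add: sum_subtractf[symmetric] algebra_simps)

lemma cinner_smult_left: "cinner (c \<cdot>\<^sub>v u) w = cnj c * cinner u w"
  unfolding cinner_def by (simp add: sum_distrib_left mult_ac)

lemma cinner_smult_right: "dim_vec w = dim_vec u \<Longrightarrow> cinner u (c \<cdot>\<^sub>v w) = c * cinner u w"
  unfolding cinner_def by (simp add: sum_distrib_left mult_ac)

lemma sq_norm_smult: "sq_norm (c \<cdot>\<^sub>v v) = (cmod c)\<^sup>2 * sq_norm v"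
  unfolding sq_norm_def by (simp add: sum_distrib_left norm_mult power_mult_distrib)

lemma sum_mult_le_sqrt_sum_sq:
  fixes a b :: "nat \<Rightarrow> real"
  assumes "finite I" "\<And>i. a i \<ge> 0" "\<And>i. b i \<ge> 0"
  shows "(\<Sum>i\<in>I. a i * b i) \<le> sqrt (\<Sum>i\<in>I. (a i)\<^sup>2) * sqrt (\<Sum>i\<in>I. (b i)\<^sup>2)"
proof -
  define A where "A = sqrt (\<Sum>i\<in>I. (a i)\<^sup>2)"
  define B where "B = sqrt (\<Sum>i\<in>I. (b i)\<^sup>2)"
  have A0: "A \<ge> 0" and B0: "B \<ge> 0" unfolding A_def B_def by (auto intro: sum_nonneg)
  have AA: "A\<^sup>2 = (\<Sum>i\<in>I. (a i)\<^sup>2)" unfolding A_def by (simp add: sum_nonneg)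
  have BB: "B\<^sup>2 = (\<Sum>i\<in>I. (b i)\<^sup>2)" unfolding B_def by (simp add: sum_nonneg)
  show ?thesis
  proof (cases "A = 0 \<or> B = 0")
    case True
    then have "(\<forall>i\<in>I. a i = 0) \<or> (\<forall>i\<in>I. b i = 0)"
      using AA BB assms(1) sum_nonneg_eq_0_iff[of I "\<lambda>i. (a i)\<^sup>2"] sum_nonneg_eq_0_iff[of I "\<lambda>i. (b i)\<^sup>2"]
      by auto
    then show ?thesis by (auto simp: sum_nonneg)
  next
    case False
    then have Ap: "A > 0" and Bp: "B > 0" using A0 B0 by auto
    text \<open>AM-GM: \<open>a b \<le> (B/A a\<^sup>2 + A/B b\<^sup>2) / 2\<close>, which sums to \<open>A B\<close>.\<close>
    have "a i * b i \<le> (B / A * (a i)\<^sup>2 + A / B * (b i)\<^sup>2) / 2" for i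
    proof -
      have "0 \<le> (B * a i - A * b i)\<^sup>2" by simp
      then have "2 * (A * B) * (a i * b i) \<le> B\<^sup>2 * (a i)\<^sup>2 + A\<^sup>2 * (b i)\<^sup>2"
        by (simp add: power2_eq_square algebra_simps)
      then show ?thesis using Ap Bp by (simp add: field_simps power2_eq_square)
    qed
    then have "(\<Sum>i\<in>I. a i * b i) \<le> (\<Sum>i\<in>I. (B / A * (a i)\<^sup>2 + A / B * (b i)\<^sup>2) / 2)"
      by (rule sum_mono)
    also have "\<dots> = (B / A * A\<^sup>2 + A / B * B\<^sup>2) / 2"
      unfolding AA BB by (simp add: sum.distrib sum_distrib_left sum_divide_distrib[symmetric])
    also have "\<dots> = A * B" using Ap Bp by (simp add: field_simps power2_eq_square)
    finally show ?thesis unfolding A_def B_def .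
  qed
qed

lemma cauchy_schwarz_cinner:
  assumes "dim_vec w = dim_vec u"
  shows "cmod (cinner u w) \<le> sqrt (sq_norm u) * sqrt (sq_norm w)"
proof -
  have "cmod (cinner u w) \<le> (\<Sum>i<dim_vec u. cmod (u $ i) * cmod (w $ i))"
    unfolding cinner_def by (rule order_trans[OF norm_sum]) (simp add: norm_mult)
  also have "\<dots> \<le> sqrt (sq_norm u) * sqrt (sq_norm w)"
    unfolding sq_norm_def using assms sum_mult_le_sqrt_sum_sq[of "{..<dim_vec u}" "\<lambda>i. cmod (u$i)" "\<lambda>i. cmod (w$i)"]
    by simp
  finally show ?thesis .
qed

lemma cinner_mult_mat_vec_left:
  assumes W: "W \<in> carrier_mat n k" and v: "v \<in> carrier_vec k" and x: "x \<in> carrier_vec n"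
  shows "cinner (W *\<^sub>v v) x = cinner v (adj W *\<^sub>v x)"
proof -
  have "cinner (W *\<^sub>v v) x = (\<Sum>a<n. \<Sum>i<k. cnj (v $ i) * (cnj (W $$ (a,i)) * x $ a))"
    unfolding cinner_def using W v
    by (simp add: mult_mat_vec_entry sum_distrib_right sum_distrib_left mult_ac del: index_mult_mat_vec)
  also have "\<dots> = (\<Sum>i<k. cnj (v $ i) * (\<Sum>a<n. adj W $$ (i,a) * x $ a))"
    using W by (subst sum.swap) (simp add: sum_distrib_left)
  also have "\<dots> = cinner v (adj W *\<^sub>v x)"
    unfolding cinner_def using W v x adj_carrier[OF W]
    by (simp add: mult_mat_vec_entry del: index_mult_mat_vec)
  finally show ?thesis .
qed

lemma expect_mult_mat_vec:
  assumes W: "W \<in> carrier_mat n n" and v: "v \<in> carrier_vec n" and M: "M \<in> carrier_mat n n"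
  shows "expect (W *\<^sub>v v) M = expect v (adj W * M * W)"
proof -
  have "expect (W *\<^sub>v v) M = cinner v (adj W *\<^sub>v (M *\<^sub>v (W *\<^sub>v v)))"
    unfolding expect_def by (rule cinner_mult_mat_vec_left[OF W v]) (use M W v in simp)
  also have "adj W *\<^sub>v (M *\<^sub>v (W *\<^sub>v v)) = (adj W * M * W) *\<^sub>v v"
    using W M v adj_carrier[OF W] by (simp add: assoc_mult_mat_vec[of _ n n _ n])
  finally show ?thesis by (simp add: expect_def)
qed

lemma sq_norm_unitary:
  assumes U: "is_unitary n U" and v: "v \<in> carrier_vec n"
  shows "sq_norm (U *\<^sub>v v) = sq_norm v"
proof -
  have c: "U \<in> carrier_mat n n" "adj U * U = 1\<^sub>m n" using U unfolding is_unitary_def by auto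
  have "of_real (sq_norm (U *\<^sub>v v)) = cinner v (adj U *\<^sub>v (U *\<^sub>v v))"
    unfolding cinner_self[symmetric] by (rule cinner_mult_mat_vec_left[OF c(1) v]) (use c v in simp)
  also have "adj U *\<^sub>v (U *\<^sub>v v) = v"
    using c v adj_carrier[OF c(1)] by (simp add: assoc_mult_mat_vec[symmetric, of _ n n _ n])
  finally show ?thesis by (simp add: cinner_self)
qed

lemma expect_diff_le_sq_norm_diff:
  assumes x: "x \<in> carrier_vec N" and y: "y \<in> carrier_vec N"
    and nx: "sq_norm x = 1" and ny: "sq_norm y = 1" and U: "is_unitary N O'"
  shows "cmod (expect x O' - expect y O') \<le> 2 * sqrt (sq_norm (x - y))"
proof -
  have cO: "O' \<in> carrier_mat N N" using U unfolding is_unitary_def by auto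
  have xy: "x - y \<in> carrier_vec N" using x y by simp
  have "expect x O' - expect y O' = cinner (x - y) (O' *\<^sub>v x) + cinner y (O' *\<^sub>v (x - y))"
    using cO x y by (simp add: expect_def cinner_diff_left[OF x y] mult_minus_distrib_mat_vec[OF cO x y]
        cinner_diff_right[OF y])
  then have "cmod (expect x O' - expect y O') \<le> cmod (cinner (x - y) (O' *\<^sub>v x)) + cmod (cinner y (O' *\<^sub>v (x - y)))"
    by (metis norm_triangle_ineq)
  also have "\<dots> \<le> sqrt (sq_norm (x - y)) * sqrt (sq_norm (O' *\<^sub>v x)) + sqrt (sq_norm y) * sqrt (sq_norm (O' *\<^sub>v (x - y)))"
    by (intro add_mono cauchy_schwarz_cinner) (use cO x y in simp_all)
  also have "\<dots> = 2 * sqrt (sq_norm (x - y))"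
    using sq_norm_unitary[OF U x] sq_norm_unitary[OF U xy] nx ny by simp
  finally show ?thesis .
qed

lemma expect_smult_unit:
  assumes v: "v \<in> carrier_vec N" and M: "M \<in> carrier_mat N N" and c: "cmod c = 1"
  shows "expect (c \<cdot>\<^sub>v v) M = expect v M"
proof -
  have "cnj c * c = 1" using c by (metis cnj_mult_self of_real_1 power_one)
  moreover have "expect (c \<cdot>\<^sub>v v) M = cnj c * (c * expect v M)"
    using mult_mat_vec[OF M v] M v by (simp add: expect_def cinner_smult_left cinner_smult_right)
  ultimately show ?thesis by (simp add: mult.assoc[symmetric])
qed

text \<open>Rotating the phase of \<open>y\<close> makes \<open>\<langle>y, x\<rangle>\<close> real and nonnegative.\<close>

lemma sq_norm_diff_aligned_phase:
  assumes x: "x \<in> carrier_vec N" and y: "y \<in> carrier_vec N" and nx: "sq_norm x = 1" and ny: "sq_norm y = 1"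
  obtains c where "cmod c = 1" "sq_norm (x - c \<cdot>\<^sub>v y) = 2 - 2 * cmod (cinner y x)"
proof
  define s where "s = cinner y x"
  define c where "c = (if s = 0 then 1 else s / cmod s)"
  show c1: "cmod c = 1" by (auto simp: c_def norm_divide)
  let ?y = "c \<cdot>\<^sub>v y"
  have y': "?y \<in> carrier_vec N" using y by simp
  have s': "cinner ?y x = of_real (cmod s)"
  proof (cases "s = 0")
    case True
    then show ?thesis by (simp add: cinner_smult_left s_def[symmetric])
  next
    case False
    have "cinner ?y x = cnj c * s" by (simp add: cinner_smult_left s_def)
    also have "\<dots> = s * cnj s / of_real (cmod s)" using False by (simp add: c_def)
    also have "\<dots> = of_real (cmod s)"
      using False by (simp add: complex_norm_square[symmetric] power2_eq_square)
    finally show ?thesis .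
  qed
  have "of_real (sq_norm (x - ?y)) = cinner x x - cnj (cinner ?y x) - (cinner ?y x - cinner ?y ?y)"
    using x y' cinner_commute[of x ?y]
    by (simp add: cinner_self[symmetric] cinner_diff_left[OF x y'] cinner_diff_right[OF x x y']
        cinner_diff_right[OF y' x y'])
  also have "\<dots> = of_real (2 - 2 * cmod s)"
    using s' nx ny c1 sq_norm_smult[of c y] by (simp add: cinner_self)
  finally show "sq_norm (x - ?y) = 2 - 2 * cmod (cinner y x)" unfolding s_def of_real_eq_iff .
qed

lemma frobenius_sq_proj_diff:
  assumes x: "x \<in> carrier_vec N" and y: "y \<in> carrier_vec N" and nx: "sq_norm x = 1" and ny: "sq_norm y = 1"
  shows "frobenius_sq (proj x - proj y) = 2 - 2 * (cmod (cinner y x))\<^sup>2"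
proof -
  let ?s = "cinner y x"
  have sq_diff: "(cmod (a - b))\<^sup>2 = (cmod a)\<^sup>2 + (cmod b)\<^sup>2 - 2 * Re (a * cnj b)" for a b
    unfolding cmod_power2 by (simp add: power2_eq_square algebra_simps)
  have sq_sum: "(\<Sum>i<N. \<Sum>j<N. (cmod (v $ i))\<^sup>2 * (cmod (v $ j))\<^sup>2) = (sq_norm v)\<^sup>2"
    if "v \<in> carrier_vec N" for v
    using that by (simp add: sq_norm_def sum_product power2_eq_square)
  have "frobenius_sq (proj x - proj y) = (\<Sum>i<N. \<Sum>j<N. (cmod (x $ i * cnj (x $ j) - y $ i * cnj (y $ j)))\<^sup>2)"
    unfolding frobenius_sq_def using x y by (simp add: proj_def)
  also have "\<dots> = (\<Sum>i<N. \<Sum>j<N. (cmod (x $ i))\<^sup>2 * (cmod (x $ j))\<^sup>2 + (cmod (y $ i))\<^sup>2 * (cmod (y $ j))\<^sup>2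
      - 2 * Re ((x $ i * cnj (y $ i)) * (cnj (x $ j) * y $ j)))"
    unfolding sq_diff by (intro sum.cong refl) (simp add: norm_mult power_mult_distrib mult_ac)
  also have "\<dots> = (\<Sum>i<N. \<Sum>j<N. (cmod (x $ i))\<^sup>2 * (cmod (x $ j))\<^sup>2)
      + (\<Sum>i<N. \<Sum>j<N. (cmod (y $ i))\<^sup>2 * (cmod (y $ j))\<^sup>2)
      - 2 * (\<Sum>i<N. \<Sum>j<N. Re ((x $ i * cnj (y $ i)) * (cnj (x $ j) * y $ j)))"
    by (simp only: sum.distrib sum_subtractf sum_distrib_left[symmetric])
  also have "(\<Sum>i<N. \<Sum>j<N. Re ((x $ i * cnj (y $ i)) * (cnj (x $ j) * y $ j)))
      = Re ((\<Sum>i<N. x $ i * cnj (y $ i)) * (\<Sum>j<N. cnj (x $ j) * y $ j))"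
    by (simp only: sum_product Re_sum)
  also have "(\<Sum>i<N. x $ i * cnj (y $ i)) = ?s"
    using y by (simp add: cinner_def mult.commute)
  also have "(\<Sum>j<N. cnj (x $ j) * y $ j) = cnj ?s"
    using y by (simp add: cinner_def cnj_sum mult.commute)
  finally show ?thesis
    using sq_sum[OF x] sq_sum[OF y] nx ny by (simp add: complex_norm_square[symmetric])
qed

lemma expect_diff_le_frobenius:
  assumes x: "x \<in> carrier_vec N" and y: "y \<in> carrier_vec N"
    and nx: "sq_norm x = 1" and ny: "sq_norm y = 1" and U: "is_unitary N O'"
  shows "cmod (expect x O' - expect y O') \<le> 2 * sqrt (frobenius_sq (proj x - proj y))"
proof -
  obtain c where c: "cmod c = 1" and d: "sq_norm (x - c \<cdot>\<^sub>v y) = 2 - 2 * cmod (cinner y x)"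
    using sq_norm_diff_aligned_phase[OF x y nx ny] .
  have y': "c \<cdot>\<^sub>v y \<in> carrier_vec N" "sq_norm (c \<cdot>\<^sub>v y) = 1"
    using y ny c by (auto simp: sq_norm_smult)
  have "cmod (cinner y x) \<le> 1" using cauchy_schwarz_cinner[of x y] x y nx ny by simp
  then have "sq_norm (x - c \<cdot>\<^sub>v y) \<le> frobenius_sq (proj x - proj y)"
    unfolding d frobenius_sq_proj_diff[OF x y nx ny] by (simp add: power2_eq_square mult_le_one mult_left_le)
  then have "2 * sqrt (sq_norm (x - c \<cdot>\<^sub>v y)) \<le> 2 * sqrt (frobenius_sq (proj x - proj y))"
    by simp
  moreover have "expect (c \<cdot>\<^sub>v y) O' = expect y O'"
    using expect_smult_unit[OF y _ c] U by (simp add: is_unitary_def)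
  then have "cmod (expect x O' - expect y O') \<le> 2 * sqrt (sq_norm (x - c \<cdot>\<^sub>v y))"
    using expect_diff_le_sq_norm_diff[OF x y'(1) nx y'(2) U] by simp
  ultimately show ?thesis by linarith
qed

definition mat_trace :: "complex mat \<Rightarrow> complex" where
  "mat_trace M = (\<Sum>i<dim_row M. M $$ (i,i))"

lemma proj_carrier: "v \<in> carrier_vec N \<Longrightarrow> proj v \<in> carrier_mat N N"
  by (simp add: proj_def)

lemma mat_trace_mult_commute:
  assumes X: "X \<in> carrier_mat n k" and Y: "Y \<in> carrier_mat k n"
  shows "mat_trace (X * Y) = mat_trace (Y * X)"
proof -
  have "mat_trace (X * Y) = (\<Sum>i<n. (X * Y) $$ (i,i))" unfolding mat_trace_def using X by simp
  also have "\<dots> = (\<Sum>i<n. \<Sum>z<k. X $$ (i,z) * Y $$ (z,i))"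
    by (intro sum.cong refl) (rule mult_entry[OF X Y]; simp)
  also have "\<dots> = (\<Sum>z<k. \<Sum>i<n. Y $$ (z,i) * X $$ (i,z))"
    by (subst sum.swap) (simp add: mult.commute)
  also have "\<dots> = (\<Sum>z<k. (Y * X) $$ (z,z))"
    by (intro sum.cong refl) (rule mult_entry[OF Y X, symmetric]; simp)
  also have "\<dots> = mat_trace (Y * X)" unfolding mat_trace_def using Y by simp
  finally show ?thesis .
qed

lemma sum_list_eq_mat_trace:
  assumes B: "B \<in> carrier_mat n n" and es: "char_poly B = (\<Prod>e\<leftarrow>es. [:- e, 1:])"
  shows "sum_list es = mat_trace B"
proof -
  obtain T P Q where sch: "schur_decomposition B es = (T, P, Q)"
    by (cases "schur_decomposition B es") auto
  from schur_decomposition[OF B es sch]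
  have sw: "similar_mat_wit B T P Q" and dT: "diag_mat T = es" by auto
  from similar_mat_witD2[OF B sw] have cT: "T \<in> carrier_mat n n" and cP: "P \<in> carrier_mat n n"
    and cQ: "Q \<in> carrier_mat n n" and QP: "Q * P = 1\<^sub>m n" and BT: "B = P * T * Q" by auto
  have "mat_trace B = mat_trace (Q * (P * T))"
    using BT mat_trace_mult_commute[of "P * T" n n Q] cP cT cQ by simp
  also have "Q * (P * T) = T" using cP cT cQ QP by (simp add: assoc_mult_mat[symmetric, of Q n n P n T n])
  also have "mat_trace T = sum_list (map (\<lambda>i. T $$ (i,i)) [0..<n])"
    using cT by (simp add: mat_trace_def sum_list_sum_nth atLeast0LessThan)
  also have "\<dots> = sum_list es" using dT cT by (simp add: diag_mat_def)
  finally show ?thesis by simp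
qed

lemma order_prod_linear:
  "Polynomial.order z (\<Prod>e\<leftarrow>es. [:- e, 1:]) = count_list (es :: complex list) z"
proof (induction es)
  case (Cons e es)
  have "(\<Prod>e\<leftarrow>es. [:- e, 1:]) \<noteq> (0 :: complex poly)" "[:- e, 1:] \<noteq> (0 :: complex poly)"
    unfolding prod_list_zero_iff by auto
  then have "[:- e, 1:] * (\<Prod>e\<leftarrow>es. [:- e, 1:]) \<noteq> 0" by (simp only: mult_eq_0_iff) blast
  then have "Polynomial.order z (\<Prod>e\<leftarrow>e # es. [:- e, 1:]) = Polynomial.order z [:- e, 1:] + Polynomial.order z (\<Prod>e\<leftarrow>es. [:- e, 1:])"
    unfolding list.map prod_list.Cons by (rule order_mult)
  moreover have "Polynomial.order z [:- e, 1:] = (if z = e then 1 else 0)"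
    using order_power_n_n[of z 1] by (auto simp: order_0I)
  ultimately show ?case using Cons.IH by simp
qed simp

lemma roots_prod_linear: "{x. poly (\<Prod>e\<leftarrow>es. [:- e, 1:]) x = 0} = set (es :: complex list)"
  by (induction es) (auto simp: poly_prod_list)

lemma sum_list_map_eq_sum_count_of_nat:
  "sum_list (map f xs) = (\<Sum>x\<in>set xs. of_nat (count_list xs x) * (f x :: 'b :: comm_semiring_1))"
proof (induction xs)
  case (Cons a xs)
  have "(\<Sum>x\<in>set (a # xs). of_nat (count_list (a # xs) x) * f x)
      = (\<Sum>x\<in>insert a (set xs). of_nat (count_list xs x) * f x + (if x = a then f x else 0))"
    by (intro sum.cong refl) (auto simp: algebra_simps)
  also have "\<dots> = (\<Sum>x\<in>insert a (set xs). of_nat (count_list xs x) * f x) + f a"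
    by (simp add: sum.distrib)
  also have "(\<Sum>x\<in>insert a (set xs). of_nat (count_list xs x) * f x) = (\<Sum>x\<in>set xs. of_nat (count_list xs x) * f x)"
    by (cases "a \<in> set xs") (auto simp: insert_absorb count_list_0_iff)
  finally show ?case using Cons.IH by (simp add: add.commute)
qed simp

lemma sum_list_squares_le:
  fixes xs :: "real list"
  assumes "\<forall>x\<in>set xs. 0 \<le> x"
  shows "sum_list (map (\<lambda>x. x\<^sup>2) xs) \<le> (sum_list xs)\<^sup>2"
  using assms
proof (induction xs)
  case (Cons a xs)
  then have "0 \<le> a * sum_list xs" by (simp add: sum_list_nonneg)
  then show ?case using Cons by (simp add: power2_eq_square algebra_simps)
qed simp

lemma eigenvalue_gram_nonneg:
  assumes A: "A \<in> carrier_mat n n" and e: "poly (char_poly (adj A * A)) e = 0"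
  shows "e = of_real (Re e) \<and> Re e \<ge> 0"
proof -
  have B: "adj A * A \<in> carrier_mat n n" using A adj_carrier[OF A] by simp
  have "eigenvalue (adj A * A) e" using eigenvalue_root_char_poly[OF B] e by simp
  then obtain v where v: "v \<in> carrier_vec n" "v \<noteq> 0\<^sub>v n" "(adj A * A) *\<^sub>v v = e \<cdot>\<^sub>v v"
    unfolding eigenvalue_def eigenvector_def using B by auto
  have "sq_norm v \<noteq> 0"
  proof
    assume "sq_norm v = 0"
    then have "\<forall>i\<in>{..<dim_vec v}. (cmod (v $ i))\<^sup>2 = 0"
      unfolding sq_norm_def by (subst sum_nonneg_eq_0_iff[symmetric]) auto
    then have "v = 0\<^sub>v n" using v(1) by (intro eq_vecI) auto
    with v(2) show False by simp
  qed
  then have pos: "sq_norm v > 0" using sq_norm_nonneg[of v] by simp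
  have "of_real (sq_norm (A *\<^sub>v v)) = cinner v (adj A *\<^sub>v (A *\<^sub>v v))"
    unfolding cinner_self[symmetric] by (rule cinner_mult_mat_vec_left[OF A v(1)]) (use A v in simp)
  also have "adj A *\<^sub>v (A *\<^sub>v v) = e \<cdot>\<^sub>v v"
    using A v adj_carrier[OF A] by (simp add: assoc_mult_mat_vec[of _ n n _ n])
  also have "cinner v (e \<cdot>\<^sub>v v) = e * of_real (sq_norm v)" by (simp add: cinner_smult_right cinner_self)
  finally have "e = of_real (sq_norm (A *\<^sub>v v) / sq_norm v)" using pos by (simp add: field_simps)
  then show ?thesis using pos sq_norm_nonneg[of "A *\<^sub>v v"] by simp
qed

lemma mat_trace_gram:
  assumes A: "A \<in> carrier_mat n n"
  shows "mat_trace (adj A * A) = of_real (frobenius_sq A)"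
proof -
  have "mat_trace (adj A * A) = (\<Sum>i<n. (adj A * A) $$ (i,i))" unfolding mat_trace_def using A by simp
  also have "\<dots> = (\<Sum>i<n. \<Sum>z<n. adj A $$ (i,z) * A $$ (z,i))"
    by (intro sum.cong refl) (rule mult_entry[OF adj_carrier[OF A] A]; simp)
  also have "\<dots> = (\<Sum>i<n. \<Sum>z<n. cnj (A $$ (z,i)) * A $$ (z,i))"
    using A by (intro sum.cong refl) simp
  also have "\<dots> = of_real (\<Sum>i<n. \<Sum>z<n. (cmod (A $$ (z,i)))\<^sup>2)"
    by (simp add: cnj_mult_self)
  also have "(\<Sum>i<n. \<Sum>z<n. (cmod (A $$ (z,i)))\<^sup>2) = frobenius_sq A"
    unfolding frobenius_sq_def using A by simp (rule sum.swap)
  finally show ?thesis .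
qed

lemma frobenius_le_trace_norm:
  assumes A: "A \<in> carrier_mat n n"
  shows "sqrt (frobenius_sq A) \<le> trace_norm A"
proof -
  have B: "adj A * A \<in> carrier_mat n n" using A adj_carrier[OF A] by simp
  obtain es where es: "char_poly (adj A * A) = (\<Prod>e\<leftarrow>es. [:- e, 1:])"
    using char_poly_factorized[OF B] by blast
  have real: "z = of_real (Re z) \<and> Re z \<ge> 0" if "z \<in> set es" for z
  proof (rule eigenvalue_gram_nonneg[OF A])
    show "poly (char_poly (adj A * A)) z = 0" using that roots_prod_linear[of es] unfolding es by blast
  qed
  have "trace_norm A = sum_list (map (\<lambda>z. sqrt (Re z)) es)"
    unfolding trace_norm_def Let_def es roots_prod_linear order_prod_linear
    by (simp add: sum_list_map_eq_sum_count_of_nat)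
  moreover have "frobenius_sq A = sum_list (map (\<lambda>z. (sqrt (Re z))\<^sup>2) es)"
  proof -
    have "of_real (frobenius_sq A) = sum_list es"
      using mat_trace_gram[OF A] sum_list_eq_mat_trace[OF B es] by simp
    moreover have "Re (sum_list es) = sum_list (map Re es)" by (induction es) auto
    ultimately have "frobenius_sq A = sum_list (map Re es)" by (metis Re_complex_of_real)
    also have "\<dots> = sum_list (map (\<lambda>z. (sqrt (Re z))\<^sup>2) es)"
      using real by (intro arg_cong[where f = sum_list] map_cong) auto
    finally show ?thesis .
  qed
  moreover have "sum_list (map (\<lambda>z. (sqrt (Re z))\<^sup>2) es) \<le> (sum_list (map (\<lambda>z. sqrt (Re z)) es))\<^sup>2"
  proof -
    have "\<forall>x\<in>set (map (\<lambda>z. sqrt (Re z)) es). 0 \<le> x" using real by auto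
    from sum_list_squares_le[OF this] show ?thesis by (simp add: comp_def)
  qed
  moreover have "0 \<le> sum_list (map (\<lambda>z. sqrt (Re z)) es)" by (rule sum_list_nonneg) (use real in auto)
  ultimately show ?thesis using real_sqrt_le_mono real_sqrt_abs abs_of_nonneg by metis
qed

lemma expect_diff_le_trace_norm:
  assumes x: "x \<in> carrier_vec N" and y: "y \<in> carrier_vec N"
    and nx: "sq_norm x = 1" and ny: "sq_norm y = 1" and U: "is_unitary N O'"
  shows "cmod (expect x O' - expect y O') \<le> 2 * trace_norm (proj x - proj y)"
proof -
  have "proj x - proj y \<in> carrier_mat N N" using proj_carrier[OF y] by (rule minus_carrier_mat)
  then show ?thesis using expect_diff_le_frobenius[OF assms] frobenius_le_trace_norm[of _ N] by force
qed

lemma expect_eq_if_proj_eq: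
  assumes x: "x \<in> carrier_vec N" and y: "y \<in> carrier_vec N"
    and nx: "sq_norm x = 1" and ny: "sq_norm y = 1" and U: "is_unitary N O'" and e: "proj x = proj y"
  shows "expect x O' = expect y O'"
proof -
  have "frobenius_sq (proj x - proj y) = 0"
    using e y by (simp add: frobenius_sq_def proj_def)
  then show ?thesis using expect_diff_le_frobenius[OF assms(1-5)] by simp
qed

lemma expect_eq_sum_diag:
  assumes v: "v \<in> carrier_vec N" and M: "M \<in> carrier_mat N N" and P: "P \<subseteq> {..<N}"
    and v_zero: "\<And>i. i < N \<Longrightarrow> i \<notin> P \<Longrightarrow> v $ i = 0"
    and M_zero: "\<And>i j. i \<in> P \<Longrightarrow> j \<in> P \<Longrightarrow> i \<noteq> j \<Longrightarrow> M $$ (i,j) = 0"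
  shows "expect v M = (\<Sum>i\<in>P. of_real ((cmod (v $ i))\<^sup>2) * M $$ (i,i))"
proof -
  have Mv: "(M *\<^sub>v v) $ i = M $$ (i,i) * v $ i" if i: "i \<in> P" for i
  proof -
    have "(M *\<^sub>v v) $ i = (\<Sum>j<N. M $$ (i,j) * v $ j)" using i P by (intro mult_mat_vec_entry[OF M v]) auto
    also have "\<dots> = M $$ (i,i) * v $ i" by (rule sum_eq_single) (use i P v_zero M_zero in auto)
    finally show ?thesis .
  qed
  have "expect v M = (\<Sum>i<N. cnj (v $ i) * (M *\<^sub>v v) $ i)" unfolding expect_def cinner_def using v by simp
  also have "\<dots> = (\<Sum>i\<in>P. cnj (v $ i) * (M *\<^sub>v v) $ i)"
    by (rule sum.mono_neutral_right) (use P v_zero in auto)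
  also have "\<dots> = (\<Sum>i\<in>P. of_real ((cmod (v $ i))\<^sup>2) * M $$ (i,i))"
    by (intro sum.cong refl) (simp add: Mv mult.assoc[symmetric] cnj_mult_self)
  finally show ?thesis .
qed

lemma conj_proj:
  assumes W: "W \<in> carrier_mat N N" and v: "v \<in> carrier_vec N"
  shows "W * proj v * adj W = proj (W *\<^sub>v v)"
proof (rule eq_matI)
  fix i j assume "i < dim_row (proj (W *\<^sub>v v))" "j < dim_col (proj (W *\<^sub>v v))"
  then have i: "i < N" and j: "j < N" using W by (auto simp: proj_def)
  have cWP: "W * proj v \<in> carrier_mat N N" using W proj_carrier[OF v] by simp
  have "(W * proj v) $$ (i,b) = (\<Sum>a<N. W $$ (i,a) * (v $ a * cnj (v $ b)))" if "b < N" for b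
    using that v mult_entry[OF W proj_carrier[OF v] i that] by (simp add: proj_def)
  then have "(W * proj v * adj W) $$ (i,j) = (\<Sum>b<N. (\<Sum>a<N. W $$ (i,a) * (v $ a * cnj (v $ b))) * cnj (W $$ (j,b)))"
    using mult_entry[OF cWP adj_carrier[OF W] i j] W j by (auto intro!: sum.cong)
  also have "\<dots> = (\<Sum>a<N. W $$ (i,a) * v $ a) * cnj (\<Sum>b<N. W $$ (j,b) * v $ b)"
    by (simp add: sum_distrib_left sum_distrib_right cnj_sum mult_ac)
  also have "\<dots> = proj (W *\<^sub>v v) $$ (i,j)"
    using W v i j by (simp add: proj_def mult_mat_vec_entry del: index_mult_mat_vec)
  finally show "(W * proj v * adj W) $$ (i,j) = proj (W *\<^sub>v v) $$ (i,j)" .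
qed (use W v in \<open>auto simp: proj_def\<close>)

section \<open>CAT states\<close>

definition ones :: "nat \<Rightarrow> nat" where
  "ones n = 2^n - 1"

lemma ones_less: "ones n < 2^n"
  by (simp add: ones_def)

lemma bit_ones: "bit (ones n) k \<longleftrightarrow> k < n"
  using bit_mask_iff[of n k, where 'a = nat] by (simp add: mask_eq_exp_minus_1 ones_def)

lemma ones_neq_0: "n \<ge> 1 \<Longrightarrow> ones n \<noteq> 0"
proof
  assume "n \<ge> 1" "ones n = 0"
  then show False using bit_ones[of n 0] by simp
qed

lemma cat_vec_carrier: "cat_vec \<gamma> m \<in> carrier_vec (2^m)"
  by (simp add: cat_vec_def)

lemma cat_vec_entry:
  assumes "i < 2^m"
  shows "cat_vec \<gamma> m $ i = (if i = 0 then complex_of_real (sqrt \<gamma>)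
      else if i = ones m then complex_of_real (sqrt (1 - \<gamma>)) else 0)"
  using assms by (simp add: cat_vec_def ones_def)

lemma expect_cat_vec:
  assumes m: "m \<ge> 1" and g: "\<gamma> \<in> {0..1}" and M: "M \<in> carrier_mat (2^m) (2^m)"
    and "M $$ (0, ones m) = 0" "M $$ (ones m, 0) = 0"
  shows "expect (cat_vec \<gamma> m) M = of_real \<gamma> * M $$ (0,0) + of_real (1 - \<gamma>) * M $$ (ones m, ones m)"
proof -
  have ne: "0 \<noteq> ones m" using ones_neq_0[OF m] by simp
  have "expect (cat_vec \<gamma> m) M = (\<Sum>i\<in>{0, ones m}. of_real ((cmod (cat_vec \<gamma> m $ i))\<^sup>2) * M $$ (i,i))"
    by (rule expect_eq_sum_diag[OF cat_vec_carrier M])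
      (use assms ones_less[of m] in \<open>auto simp: cat_vec_entry\<close>)
  also have "\<dots> = of_real \<gamma> * M $$ (0,0) + of_real (1 - \<gamma>) * M $$ (ones m, ones m)"
    using ne g ones_less[of m] by (simp add: cat_vec_entry del: of_real_power)
  finally show ?thesis .
qed

lemma sq_norm_cat_vec:
  assumes "m \<ge> 1" "\<gamma> \<in> {0..1}"
  shows "sq_norm (cat_vec \<gamma> m) = 1"
proof -
  have "of_real (sq_norm (cat_vec \<gamma> m)) = expect (cat_vec \<gamma> m) (1\<^sub>m (2^m))"
    unfolding expect_def using cat_vec_carrier[of \<gamma> m] by (simp add: cinner_self)
  also have "\<dots> = 1"
    using expect_cat_vec[OF assms, of "1\<^sub>m (2^m)"] ones_neq_0[OF assms(1)] ones_less[of m]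
    by (simp flip: of_real_add)
  finally show ?thesis by simp
qed

text \<open>The basis states \<open>0\<^sup>m\<close> and \<open>1\<^sup>m\<close> differ on every qubit, so an operator that misses a qubit
  cannot connect them: on a CAT state it sees only the classical mixture of its two branches.\<close>

lemma expect_cat_vec_acts_on:
  assumes m: "m \<ge> 1" and g: "\<gamma> \<in> {0..1}" and M: "acts_on m S M" and k: "k < m" "k \<notin> S"
  shows "expect (cat_vec \<gamma> m) M = of_real \<gamma> * M $$ (0,0) + of_real (1 - \<gamma>) * M $$ (ones m, ones m)"
proof (rule expect_cat_vec[OF m g acts_on_carrier[OF M]])
  have "\<not> agree_outside S 0 (ones m)" "\<not> agree_outside S (ones m) 0"
    using k bit_ones[of m k] by (auto simp: agree_outside_def)
  then show "M $$ (0, ones m) = 0" "M $$ (ones m, 0) = 0"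
    using acts_on_zero[OF M] ones_less[of m] by auto
qed

definition cat_pair_vec :: "real \<Rightarrow> nat \<Rightarrow> complex vec" where
  "cat_pair_vec \<beta> n = vec (2^n * 2^n) (\<lambda>i. cat_vec \<beta> n $ (i div 2^n) * cat_vec \<beta> n $ (i mod 2^n))"

lemma tensor_cat_dm_eq_proj: "tensor_mat (cat_dm \<beta> n) (cat_dm \<beta> n) = proj (cat_pair_vec \<beta> n)"
proof (rule eq_matI)
  fix i j assume "i < dim_row (proj (cat_pair_vec \<beta> n))" "j < dim_col (proj (cat_pair_vec \<beta> n))"
  then have i: "i < 2^n * 2^n" and j: "j < 2^n * 2^n" by (auto simp: proj_def cat_pair_vec_def)
  have "i div 2^n < 2^n" "j div 2^n < 2^n" using i j by (auto simp: less_mult_imp_div_less)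
  then show "tensor_mat (cat_dm \<beta> n) (cat_dm \<beta> n) $$ (i,j) = proj (cat_pair_vec \<beta> n) $$ (i,j)"
    using i j by (simp add: tensor_mat_def cat_dm_def proj_def cat_pair_vec_def cat_vec_def)
qed (auto simp: tensor_mat_def cat_dm_def proj_def cat_pair_vec_def cat_vec_def)

lemma cat_pair_vec_carrier: "cat_pair_vec \<beta> n \<in> carrier_vec (2^(2*n))"
  by (simp add: cat_pair_vec_def power_add mult_2)

definition pair_idx :: "nat \<Rightarrow> nat \<Rightarrow> nat \<Rightarrow> nat" where
  "pair_idx n a b = a * 2^n + b"

lemma pair_idx_less: "a < 2^n \<Longrightarrow> b < 2^n \<Longrightarrow> pair_idx n a b < 2^(2*n)"
proof -
  assume "a < 2^n" "b < 2^n"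
  then have "a * 2^n + b < (a + 1) * 2^n" by simp
  also have "\<dots> \<le> 2^n * 2^n" using \<open>a < 2^n\<close> by (intro mult_right_mono) auto
  finally show ?thesis by (simp add: pair_idx_def power_add mult_2)
qed

lemma bit_pair_idx:
  assumes "b < 2^n"
  shows "bit (pair_idx n a b) k \<longleftrightarrow> (if k < n then bit b k else bit a (k - n))"
proof -
  have "pair_idx n a b = Bit_Operations.or (push_bit n a) b"
    unfolding pair_idx_def push_bit_eq_mult[symmetric]
  proof (rule disjunctive_add)
    fix j
    show "\<not> bit (push_bit n a) j \<or> \<not> bit b j"
      using bit_nat_less_pow2[OF assms, of j] by (auto simp: bit_push_bit_iff_nat)
  qed
  then show ?thesis
    using bit_nat_less_pow2[OF assms, of k] by (auto simp: bit_or_iff bit_push_bit_iff_nat)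
qed

lemma bit_pair_idx_ones [simp]:
  "\<not> bit (pair_idx n 0 0) k"
  "bit (pair_idx n 0 (ones n)) k \<longleftrightarrow> k < n"
  "bit (pair_idx n (ones n) 0) k \<longleftrightarrow> n \<le> k \<and> k < 2 * n"
  "bit (pair_idx n (ones n) (ones n)) k \<longleftrightarrow> k < 2 * n"
  using bit_pair_idx[OF ones_less, of n _ k] bit_pair_idx[of 0 n _ k] bit_ones[of n] bit_ones[of n "k - n"]
  by (auto simp: pair_idx_def)

lemma pair_idx_ones_less:
  "pair_idx n 0 0 < 2^(2*n)" "pair_idx n 0 (ones n) < 2^(2*n)"
  "pair_idx n (ones n) 0 < 2^(2*n)" "pair_idx n (ones n) (ones n) < 2^(2*n)"
  by (simp_all add: pair_idx_less ones_less)

definition cat_pair_support :: "nat \<Rightarrow> nat set" where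
  "cat_pair_support n = {pair_idx n 0 0, pair_idx n 0 (ones n), pair_idx n (ones n) 0, pair_idx n (ones n) (ones n)}"

lemma cat_pair_support_subset: "cat_pair_support n \<subseteq> {..<2^(2*n)}"
  using pair_idx_ones_less by (auto simp: cat_pair_support_def)

lemma pair_idx_ones_distinct:
  assumes "n \<ge> 1"
  shows "pair_idx n 0 0 \<noteq> pair_idx n 0 (ones n)" "pair_idx n 0 0 \<noteq> pair_idx n (ones n) 0"
    "pair_idx n 0 0 \<noteq> pair_idx n (ones n) (ones n)" "pair_idx n 0 (ones n) \<noteq> pair_idx n (ones n) 0"
    "pair_idx n 0 (ones n) \<noteq> pair_idx n (ones n) (ones n)" "pair_idx n (ones n) 0 \<noteq> pair_idx n (ones n) (ones n)"
proof -
  let ?t = "2 * n - 1"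
  have "bit (pair_idx n 0 (ones n)) 0" "bit (pair_idx n (ones n) (ones n)) 0"
    "\<not> bit (pair_idx n (ones n) 0) 0" "\<not> bit (pair_idx n 0 0) 0"
    "bit (pair_idx n (ones n) 0) ?t" "bit (pair_idx n (ones n) (ones n)) ?t"
    "\<not> bit (pair_idx n 0 (ones n)) ?t" "\<not> bit (pair_idx n 0 0) ?t"
    using assms by simp_all
  then show "pair_idx n 0 0 \<noteq> pair_idx n 0 (ones n)" "pair_idx n 0 0 \<noteq> pair_idx n (ones n) 0"
    "pair_idx n 0 0 \<noteq> pair_idx n (ones n) (ones n)" "pair_idx n 0 (ones n) \<noteq> pair_idx n (ones n) 0"
    "pair_idx n 0 (ones n) \<noteq> pair_idx n (ones n) (ones n)" "pair_idx n (ones n) 0 \<noteq> pair_idx n (ones n) (ones n)"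
    by metis+
qed

lemma sum_cat_pair_support:
  assumes "n \<ge> 1"
  shows "(\<Sum>i\<in>cat_pair_support n. f i) = f (pair_idx n 0 0) + f (pair_idx n 0 (ones n))
    + f (pair_idx n (ones n) 0) + f (pair_idx n (ones n) (ones n))"
  unfolding cat_pair_support_def using pair_idx_ones_distinct[OF assms] by (simp add: algebra_simps)

lemma cat_pair_vec_pair_idx:
  assumes "a < 2^n" "b < 2^n"
  shows "cat_pair_vec \<beta> n $ pair_idx n a b = cat_vec \<beta> n $ a * cat_vec \<beta> n $ b"
  using assms pair_idx_less[OF assms] by (simp add: cat_pair_vec_def pair_idx_def power_add mult_2)

lemma cat_pair_vec_zero:
  assumes "i < 2^(2*n)" "i \<notin> cat_pair_support n"
  shows "cat_pair_vec \<beta> n $ i = 0"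
proof -
  have i: "i = pair_idx n (i div 2^n) (i mod 2^n)" using div_mult_mod_eq[of i "2^n"] by (simp add: pair_idx_def)
  have "i div 2^n < 2^n" using assms(1) by (simp add: power_add mult_2 less_mult_imp_div_less)
  moreover have "\<not> ((i div 2^n = 0 \<or> i div 2^n = ones n) \<and> (i mod 2^n = 0 \<or> i mod 2^n = ones n))"
    using assms(2) i unfolding cat_pair_support_def by (metis insert_iff)
  ultimately show ?thesis
    using cat_pair_vec_pair_idx[of "i div 2^n" n "i mod 2^n" \<beta>] i by (auto simp: cat_vec_entry)
qed

lemma expect_cat_pair_vec:
  assumes n: "n \<ge> 1" and b: "\<beta> \<in> {0..1}" and M: "M \<in> carrier_mat (2^(2*n)) (2^(2*n))"
    and off: "\<And>u v. u \<in> cat_pair_support n \<Longrightarrow> v \<in> cat_pair_support n \<Longrightarrow> u \<noteq> v \<Longrightarrow> M $$ (u,v) = 0"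
  shows "expect (cat_pair_vec \<beta> n) M =
      of_real (\<beta> * \<beta>) * M $$ (pair_idx n 0 0, pair_idx n 0 0)
    + of_real (\<beta> * (1 - \<beta>)) * M $$ (pair_idx n 0 (ones n), pair_idx n 0 (ones n))
    + of_real ((1 - \<beta>) * \<beta>) * M $$ (pair_idx n (ones n) 0, pair_idx n (ones n) 0)
    + of_real ((1 - \<beta>) * (1 - \<beta>)) * M $$ (pair_idx n (ones n) (ones n), pair_idx n (ones n) (ones n))"
proof -
  have pos: "(0::nat) < 2^n" by simp
  have w: "(cmod (cat_pair_vec \<beta> n $ pair_idx n a b))\<^sup>2 = (cmod (cat_vec \<beta> n $ a))\<^sup>2 * (cmod (cat_vec \<beta> n $ b))\<^sup>2"
    if "a < 2^n" "b < 2^n" for a b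
    using that by (simp add: cat_pair_vec_pair_idx norm_mult power_mult_distrib)
  have c0: "(cmod (cat_vec \<beta> n $ 0))\<^sup>2 = \<beta>" and c1: "(cmod (cat_vec \<beta> n $ ones n))\<^sup>2 = 1 - \<beta>"
    using b ones_neq_0[OF n] ones_less[of n] by (auto simp: cat_vec_entry)
  have "expect (cat_pair_vec \<beta> n) M
      = (\<Sum>i\<in>cat_pair_support n. of_real ((cmod (cat_pair_vec \<beta> n $ i))\<^sup>2) * M $$ (i,i))"
    by (rule expect_eq_sum_diag[OF cat_pair_vec_carrier M cat_pair_support_subset cat_pair_vec_zero off])
  also have "\<dots> = of_real (\<beta> * \<beta>) * M $$ (pair_idx n 0 0, pair_idx n 0 0)
    + of_real (\<beta> * (1 - \<beta>)) * M $$ (pair_idx n 0 (ones n), pair_idx n 0 (ones n))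
    + of_real ((1 - \<beta>) * \<beta>) * M $$ (pair_idx n (ones n) 0, pair_idx n (ones n) 0)
    + of_real ((1 - \<beta>) * (1 - \<beta>)) * M $$ (pair_idx n (ones n) (ones n), pair_idx n (ones n) (ones n))"
    unfolding sum_cat_pair_support[OF n] w[OF pos pos] w[OF pos ones_less] w[OF ones_less pos]
      w[OF ones_less ones_less] c0 c1 ..
  finally show ?thesis .
qed

lemma cat_pair_support_eq:
  assumes "n \<ge> 1" "u \<in> cat_pair_support n"
  shows "u = pair_idx n (if bit u n then ones n else 0) (if bit u 0 then ones n else 0)"
  using assms unfolding cat_pair_support_def by auto

lemma acts_on_cat_pair_offdiag:
  assumes M: "acts_on (2*n) S M" and k1: "n \<le> k1" "k1 < 2*n" "k1 \<notin> S" and k2: "k2 < n" "k2 \<notin> S"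
    and uv: "u \<in> cat_pair_support n" "v \<in> cat_pair_support n" "u \<noteq> v"
  shows "M $$ (u,v) = 0"
proof -
  have same_bit: "bit w k1 = bit w n" "bit w k2 = bit w 0" if "w \<in> cat_pair_support n" for w
    using that k1 k2 unfolding cat_pair_support_def by auto
  have "\<not> agree_outside S u v"
  proof
    assume "agree_outside S u v"
    then have "bit u k1 = bit v k1" "bit u k2 = bit v k2" using k1 k2 by (auto simp: agree_outside_def)
    then have "bit u n = bit v n" "bit u 0 = bit v 0" using same_bit uv by auto
    moreover have "n \<ge> 1" using k2 by simp
    ultimately show False using cat_pair_support_eq[OF _ uv(1)] cat_pair_support_eq[OF _ uv(2)] uv(3) by metis
  qed
  then show ?thesis using acts_on_zero[OF M] uv cat_pair_support_subset by blast
qed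

lemma expect_cat_pair_vec_diag_op:
  assumes n: "n \<ge> 1" and b: "\<beta> \<in> {0..1}"
  shows "expect (cat_pair_vec \<beta> n) (diag_op (2*n) f) =
      of_real (\<beta> * \<beta>) * f (pair_idx n 0 0) + of_real (\<beta> * (1 - \<beta>)) * f (pair_idx n 0 (ones n))
    + of_real ((1 - \<beta>) * \<beta>) * f (pair_idx n (ones n) 0) + of_real ((1 - \<beta>) * (1 - \<beta>)) * f (pair_idx n (ones n) (ones n))"
proof -
  have d: "diag_op (2*n) f $$ (u,u) = f u" if "u < 2^(2*n)" for u using that by (simp add: diag_op_def)
  have off: "diag_op (2*n) f $$ (u,v) = 0"
    if "u \<in> cat_pair_support n" "v \<in> cat_pair_support n" "u \<noteq> v" for u v
    using that subsetD[OF cat_pair_support_subset] by (auto simp: diag_op_def)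
  show ?thesis
    using expect_cat_pair_vec[OF n b diag_op_carrier, of f] off by (simp add: d pair_idx_ones_less)
qed

lemma sq_norm_cat_pair_vec:
  assumes n: "n \<ge> 1" and b: "\<beta> \<in> {0..1}"
  shows "sq_norm (cat_pair_vec \<beta> n) = 1"
proof -
  have "diag_op (2*n) (\<lambda>_. 1) = 1\<^sub>m (2^(2*n))" by (rule eq_matI) (auto simp: diag_op_def)
  then have "of_real (sq_norm (cat_pair_vec \<beta> n)) = expect (cat_pair_vec \<beta> n) (diag_op (2*n) (\<lambda>_. 1))"
    unfolding expect_def using cat_pair_vec_carrier[of \<beta> n] by (simp add: cinner_self)
  also have "\<dots> = 1"
    unfolding expect_cat_pair_vec_diag_op[OF n b]
    by (simp add: algebra_simps flip: of_real_mult of_real_add of_real_diff)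
  finally show ?thesis by simp
qed

lemma pauli_z_entry:
  "u < 2^m \<Longrightarrow> v < 2^m \<Longrightarrow> pauli_z m q $$ (u,v) = (if u = v then (if bit u q then -1 else 1) else 0)"
  by (simp add: pauli_z_def diag_op_def)

lemma pauli_z_mult:
  "pauli_z m q * pauli_z m q' = diag_op m (\<lambda>i. (if bit i q then -1 else 1) * (if bit i q' then -1 else 1))"
  unfolding pauli_z_def diag_op_mult ..

lemma expect_cat_vec_pauli_z:
  assumes m: "m \<ge> 1" and g: "\<gamma> \<in> {0..1}" and q: "q < m"
  shows "expect (cat_vec \<gamma> m) (pauli_z m q) = of_real (2 * \<gamma> - 1)"
proof -
  have ne: "0 \<noteq> ones m" using ones_neq_0[OF m] by simp
  have "expect (cat_vec \<gamma> m) (pauli_z m q)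
      = of_real \<gamma> * pauli_z m q $$ (0,0) + of_real (1 - \<gamma>) * pauli_z m q $$ (ones m, ones m)"
    by (rule expect_cat_vec[OF m g pauli_z_carrier]) (use ne ones_less[of m] in \<open>auto simp: pauli_z_entry\<close>)
  also have "\<dots> = of_real (2 * \<gamma> - 1)"
    using q bit_ones[of m q] ones_less[of m] by (simp add: pauli_z_entry algebra_simps)
  finally show ?thesis .
qed

lemma expect_cat_vec_pauli_zz:
  assumes m: "m \<ge> 1" and g: "\<gamma> \<in> {0..1}" and q: "q < m" "q' < m"
  shows "expect (cat_vec \<gamma> m) (pauli_z m q * pauli_z m q') = 1"
proof -
  have ne: "0 \<noteq> ones m" using ones_neq_0[OF m] by simp
  have "expect (cat_vec \<gamma> m) (pauli_z m q * pauli_z m q')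
      = of_real \<gamma> * (pauli_z m q * pauli_z m q') $$ (0,0)
      + of_real (1 - \<gamma>) * (pauli_z m q * pauli_z m q') $$ (ones m, ones m)"
    by (rule expect_cat_vec[OF m g]) (use ne ones_less[of m] in \<open>auto simp: pauli_z_mult diag_op_def\<close>)
  also have "\<dots> = 1"
    using q bit_ones[of m q] bit_ones[of m q'] ones_less[of m] by (simp add: pauli_z_mult diag_op_def algebra_simps)
  finally show ?thesis .
qed

lemma expect_cat_pair_vec_pauli_z:
  assumes n: "n \<ge> 1" and b: "\<beta> \<in> {0..1}" and q: "q < 2*n"
  shows "expect (cat_pair_vec \<beta> n) (pauli_z (2*n) q) = of_real (2 * \<beta> - 1)"
  using q unfolding pauli_z_def expect_cat_pair_vec_diag_op[OF n b]
  by (cases "q < n") (simp_all add: algebra_simps flip: of_real_mult of_real_add of_real_diff)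

lemma expect_cat_pair_vec_pauli_zz_same_half:
  assumes n: "n \<ge> 1" and b: "\<beta> \<in> {0..1}" and q: "q < 2*n" "q' < 2*n" and same: "q < n \<longleftrightarrow> q' < n"
  shows "expect (cat_pair_vec \<beta> n) (pauli_z (2*n) q * pauli_z (2*n) q') = 1"
  using q same unfolding pauli_z_mult expect_cat_pair_vec_diag_op[OF n b]
  by (cases "q < n") (simp_all add: algebra_simps flip: of_real_mult of_real_add of_real_diff)

lemma expect_cat_pair_vec_pauli_zz_cross:
  assumes n: "n \<ge> 1" and b: "\<beta> \<in> {0..1}" and q: "n \<le> q" "q < 2*n" "q' < n"
  shows "expect (cat_pair_vec \<beta> n) (pauli_z (2*n) q * pauli_z (2*n) q') = of_real ((2 * \<beta> - 1) * (2 * \<beta> - 1))"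
  using q unfolding pauli_z_mult expect_cat_pair_vec_diag_op[OF n b]
  by (simp add: algebra_simps flip: of_real_mult of_real_add of_real_diff)

text \<open>A diagonal entry of \<open>U\<^sup>\<dagger> Z U\<close> is the average of the signs of \<open>Z\<close> under the probability
  distribution given by a column of \<open>U\<close>.\<close>

lemma diag_conj_pauli_z:
  assumes U: "U \<in> carrier_mat (2^m) (2^m)" and UU: "adj U * U = 1\<^sub>m (2^m)" and x: "x < 2^m"
  shows "(adj U * pauli_z m q * U) $$ (x,x) = of_real (Re ((adj U * pauli_z m q * U) $$ (x,x)))
     \<and> \<bar>Re ((adj U * pauli_z m q * U) $$ (x,x))\<bar> \<le> 1"
proof -
  define z where "z b = (if bit (b::nat) q then -1 else 1 :: real)" for b
  define p where "p b = (cmod (U $$ (b,x)))\<^sup>2" for b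
  have cZ: "adj U * pauli_z m q \<in> carrier_mat (2^m) (2^m)" using adj_carrier[OF U] pauli_z_carrier by simp
  have row: "(adj U * pauli_z m q) $$ (x,b) = cnj (U $$ (b,x)) * of_real (z b)" if b: "b < 2^m" for b
  proof -
    have "(adj U * pauli_z m q) $$ (x,b) = (\<Sum>a<2^m. adj U $$ (x,a) * pauli_z m q $$ (a,b))"
      by (rule mult_entry[OF adj_carrier[OF U] pauli_z_carrier x b])
    also have "\<dots> = adj U $$ (x,b) * pauli_z m q $$ (b,b)"
      by (rule sum_eq_single) (use b in \<open>auto simp: pauli_z_entry\<close>)
    finally show ?thesis using U x b by (simp add: pauli_z_entry z_def)
  qed
  have "(adj U * pauli_z m q * U) $$ (x,x) = (\<Sum>b<2^m. (adj U * pauli_z m q) $$ (x,b) * U $$ (b,x))"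
    by (rule mult_entry[OF cZ U x x])
  also have "\<dots> = of_real (\<Sum>b<2^m. z b * p b)"
    unfolding of_real_sum
  proof (rule sum.cong[OF refl])
    fix b :: nat assume "b \<in> {..<2^m}"
    then have "(adj U * pauli_z m q) $$ (x,b) * U $$ (b,x) = of_real (z b) * (cnj (U $$ (b,x)) * U $$ (b,x))"
      using row by (simp add: mult_ac)
    then show "(adj U * pauli_z m q) $$ (x,b) * U $$ (b,x) = of_real (z b * p b)"
      by (simp only: cnj_mult_self of_real_mult p_def)
  qed
  finally have eq: "(adj U * pauli_z m q * U) $$ (x,x) = of_real (\<Sum>b<2^m. z b * p b)" .
  have "(adj U * U) $$ (x,x) = of_real (\<Sum>b<2^m. p b)"
    using mult_entry[OF adj_carrier[OF U] U x x] U x by (simp add: p_def cnj_mult_self)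
  then have sum_p: "(\<Sum>b<2^m. p b) = 1" using UU x by (metis index_one_mat(1) of_real_eq_1_iff)
  have "\<bar>\<Sum>b<2^m. z b * p b\<bar> \<le> (\<Sum>b<2^m. p b)"
    by (rule order_trans[OF sum_abs]) (auto simp: z_def p_def abs_mult intro!: sum_mono)
  then show ?thesis using eq sum_p by simp
qed

lemma expect_mult_mat_vec_conj:
  assumes W: "W \<in> carrier_mat N N" and WW: "adj W * W = 1\<^sub>m N" and v: "v \<in> carrier_vec N"
    and Z: "Z \<in> carrier_mat N N"
  shows "expect (W *\<^sub>v v) (W * Z * adj W) = expect v Z"
proof -
  have aW: "adj W \<in> carrier_mat N N" using adj_carrier[OF W] .
  have "expect (W *\<^sub>v v) (W * Z * adj W) = expect v (adj W * (W * Z * adj W) * W)"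
    by (rule expect_mult_mat_vec[OF W v]) (use W Z aW in simp)
  also have "adj W * (W * Z * adj W) * W = (adj W * W) * Z * (adj W * W)"
    using W aW Z by (simp add: assoc_mult_mat[of _ N N _ N _ N])
  finally show ?thesis using WW Z by simp
qed

lemma expect_cat_pair_vec_acts_on:
  assumes n: "n \<ge> 1" and b: "\<beta> \<in> {0..1}" and M: "acts_on (2*n) S M"
    and k1: "n \<le> k1" "k1 < 2*n" "k1 \<notin> S" and k2: "k2 < n" "k2 \<notin> S"
  shows "expect (cat_pair_vec \<beta> n) M =
      of_real (\<beta> * \<beta>) * M $$ (pair_idx n 0 0, pair_idx n 0 0)
    + of_real (\<beta> * (1 - \<beta>)) * M $$ (pair_idx n 0 (ones n), pair_idx n 0 (ones n))
    + of_real ((1 - \<beta>) * \<beta>) * M $$ (pair_idx n (ones n) 0, pair_idx n (ones n) 0)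
    + of_real ((1 - \<beta>) * (1 - \<beta>)) * M $$ (pair_idx n (ones n) (ones n), pair_idx n (ones n) (ones n))"
  using expect_cat_pair_vec[OF n b acts_on_carrier[OF M]] acts_on_cat_pair_offdiag[OF M k1 k2] by blast

lemma cmod_of_real_diff_le: "cmod (of_real a - of_real b) \<le> e \<Longrightarrow> \<bar>a - b\<bar> \<le> e"
  by (metis norm_of_real of_real_diff)

lemma abs_mult_sub_sq_le:
  fixes P Q m e :: real
  assumes "\<bar>P - m\<bar> \<le> e" "\<bar>Q - m\<bar> \<le> e" "\<bar>Q\<bar> \<le> 1" "\<bar>m\<bar> \<le> 1"
  shows "\<bar>P * Q - m * m\<bar> \<le> 2 * e"
proof -
  have "P * Q - m * m = (P - m) * Q + m * (Q - m)" by (simp add: algebra_simps)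
  then have "\<bar>P * Q - m * m\<bar> \<le> \<bar>P - m\<bar> * \<bar>Q\<bar> + \<bar>m\<bar> * \<bar>Q - m\<bar>"
    by (metis abs_mult abs_triangle_ineq)
  also have "\<dots> \<le> e * 1 + 1 * e"
    using assms by (intro add_mono mult_mono) auto
  finally show ?thesis by simp
qed

lemma abs_convex_comb_le_1: "0 \<le> (a::real) \<Longrightarrow> a \<le> 1 \<Longrightarrow> \<bar>f\<bar> \<le> 1 \<Longrightarrow> \<bar>g\<bar> \<le> 1 \<Longrightarrow> \<bar>a * f + (1 - a) * g\<bar> \<le> 1"
proof -
  assume a: "0 \<le> a" "a \<le> 1" "\<bar>f\<bar> \<le> 1" "\<bar>g\<bar> \<le> 1"
  have "\<bar>a * f + (1 - a) * g\<bar> \<le> a * \<bar>f\<bar> + (1 - a) * \<bar>g\<bar>"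
    using a by (metis abs_mult abs_of_nonneg abs_triangle_ineq diff_ge_0_iff_ge)
  also have "\<dots> \<le> a * 1 + (1 - a) * 1" using a by (intro add_mono mult_left_mono) auto
  finally show ?thesis by simp
qed

text \<open>For a two-point mixture with weights \<open>\<alpha>, 1 - \<alpha>\<close>, the covariance of \<open>(f, g)\<close> and \<open>(f', g')\<close>
  is \<open>\<alpha> (1 - \<alpha>) (f - g) (f' - g')\<close>.\<close>

lemma two_point_covariance_close:
  fixes \<alpha> m \<eta> c f g f' g' :: real
  assumes al: "0 \<le> \<alpha>" "\<alpha> \<le> 1" and m: "\<bar>m\<bar> \<le> 1" and fg: "\<bar>f'\<bar> \<le> 1" "\<bar>g'\<bar> \<le> 1"
    and s: "\<bar>\<alpha> * f + (1 - \<alpha>) * g - m\<bar> \<le> \<eta>" "\<bar>\<alpha> * f' + (1 - \<alpha>) * g' - m\<bar> \<le> \<eta>"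
    and p: "\<bar>\<alpha> * (f * f') + (1 - \<alpha>) * (g * g') - c\<bar> \<le> \<eta>"
  shows "\<bar>\<alpha> * (1 - \<alpha>) * (f - g) * (f' - g') - (c - m * m)\<bar> \<le> 3 * \<eta>"
proof -
  have "\<alpha> * (f * f') + (1 - \<alpha>) * (g * g') - (\<alpha> * f + (1 - \<alpha>) * g) * (\<alpha> * f' + (1 - \<alpha>) * g')
      = \<alpha> * (1 - \<alpha>) * (f - g) * (f' - g')"
    by (simp add: algebra_simps)
  moreover have "\<bar>(\<alpha> * f + (1 - \<alpha>) * g) * (\<alpha> * f' + (1 - \<alpha>) * g') - m * m\<bar> \<le> 2 * \<eta>"
    by (rule abs_mult_sub_sq_le[OF s abs_convex_comb_le_1[OF al fg] m])
  ultimately show ?thesis using p by linarith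
qed

text \<open>Correlations near \<open>1\<close> within the pairs \<open>(a, a')\<close>, \<open>(b, b')\<close> and near \<open>m\<^sup>2\<close> across them make
  the covariances \<open>X, Y\<close> of the pairs at least \<open>1 - m\<^sup>2 - 3\<eta>\<close> and the cross covariances \<open>U, V\<close> at
  most \<open>3\<eta>\<close> in size; but \<open>X Y = U V\<close>.\<close>

lemma two_branch_correlation_bound:
  fixes \<alpha> m \<eta> fa ga fa' ga' fb gb fb' gb' :: real
  assumes al: "0 \<le> \<alpha>" "\<alpha> \<le> 1" and mm: "\<bar>m\<bar> \<le> 1" and et: "\<eta> \<ge> 0"
    and fg: "\<bar>fa\<bar> \<le> 1" "\<bar>ga\<bar> \<le> 1" "\<bar>fa'\<bar> \<le> 1" "\<bar>ga'\<bar> \<le> 1"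
            "\<bar>fb\<bar> \<le> 1" "\<bar>gb\<bar> \<le> 1" "\<bar>fb'\<bar> \<le> 1" "\<bar>gb'\<bar> \<le> 1"
    and s: "\<bar>\<alpha> * fa + (1 - \<alpha>) * ga - m\<bar> \<le> \<eta>" "\<bar>\<alpha> * fa' + (1 - \<alpha>) * ga' - m\<bar> \<le> \<eta>"
           "\<bar>\<alpha> * fb + (1 - \<alpha>) * gb - m\<bar> \<le> \<eta>" "\<bar>\<alpha> * fb' + (1 - \<alpha>) * gb' - m\<bar> \<le> \<eta>"
    and p: "\<bar>\<alpha> * (fa * fa') + (1 - \<alpha>) * (ga * ga') - 1\<bar> \<le> \<eta>"
           "\<bar>\<alpha> * (fb * fb') + (1 - \<alpha>) * (gb * gb') - 1\<bar> \<le> \<eta>"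
           "\<bar>\<alpha> * (fa * fb) + (1 - \<alpha>) * (ga * gb) - m * m\<bar> \<le> \<eta>"
           "\<bar>\<alpha> * (fa' * fb') + (1 - \<alpha>) * (ga' * gb') - m * m\<bar> \<le> \<eta>"
  shows "1 - m * m \<le> 6 * \<eta>"
proof (rule ccontr)
  define X where "X = \<alpha> * (1 - \<alpha>) * (fa - ga) * (fa' - ga')"
  define Y where "Y = \<alpha> * (1 - \<alpha>) * (fb - gb) * (fb' - gb')"
  define U where "U = \<alpha> * (1 - \<alpha>) * (fa - ga) * (fb - gb)"
  define V where "V = \<alpha> * (1 - \<alpha>) * (fa' - ga') * (fb' - gb')"
  have X: "X \<ge> 1 - m * m - 3 * \<eta>" and Y: "Y \<ge> 1 - m * m - 3 * \<eta>"
    using two_point_covariance_close[OF al mm fg(3,4) s(1,2) p(1)]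
      two_point_covariance_close[OF al mm fg(7,8) s(3,4) p(2)] unfolding X_def Y_def by linarith+
  have U: "\<bar>U\<bar> \<le> 3 * \<eta>" and V: "\<bar>V\<bar> \<le> 3 * \<eta>"
    using two_point_covariance_close[OF al mm fg(5,6) s(1,3) p(3)]
      two_point_covariance_close[OF al mm fg(7,8) s(2,4) p(4)] unfolding U_def V_def by simp_all
  assume "\<not> 1 - m * m \<le> 6 * \<eta>"
  then have c: "1 - m * m - 3 * \<eta> > 3 * \<eta>" by simp
  have "(3 * \<eta>) * (3 * \<eta>) < (1 - m * m - 3 * \<eta>) * (1 - m * m - 3 * \<eta>)"
    using c et by (intro mult_strict_mono) auto
  also have "\<dots> \<le> X * Y" using X Y c et by (intro mult_mono) auto
  also have "\<dots> = U * V" unfolding X_def Y_def U_def V_def by (simp add: algebra_simps)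
  also have "\<dots> \<le> \<bar>U\<bar> * \<bar>V\<bar>" by (simp add: abs_mult[symmetric])
  also have "\<dots> \<le> (3 * \<eta>) * (3 * \<eta>)" using U V et by (intro mult_mono) auto
  finally show False by simp
qed

text \<open>For a four-point mixture with weights \<open>w\<close>, the covariance of \<open>h\<close> and \<open>k\<close> is the sum over
  \<open>i < j\<close> of \<open>w i * w j * (h i - h j) * (k i - k j)\<close>, hence at most \<open>4\<close> times the sum of
  \<open>w i * w j\<close> over \<open>i < j\<close>; for the weights of two independent \<open>\<beta>\<close>-coins this is
  \<open>8 \<beta> (1 - \<beta>) (1 - \<beta> (1 - \<beta>))\<close>.\<close>

lemma four_point_covariance_le:
  fixes \<beta> h00 h01 h10 h11 k00 k01 k10 k11 :: real
  assumes b: "0 \<le> \<beta>" "\<beta> \<le> 1"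
    and h: "\<bar>h00\<bar> \<le> 1" "\<bar>h01\<bar> \<le> 1" "\<bar>h10\<bar> \<le> 1" "\<bar>h11\<bar> \<le> 1"
    and k: "\<bar>k00\<bar> \<le> 1" "\<bar>k01\<bar> \<le> 1" "\<bar>k10\<bar> \<le> 1" "\<bar>k11\<bar> \<le> 1"
  defines "w00 \<equiv> \<beta> * \<beta>" and "w01 \<equiv> \<beta> * (1 - \<beta>)" and "w10 \<equiv> (1 - \<beta>) * \<beta>" and "w11 \<equiv> (1 - \<beta>) * (1 - \<beta>)"
  shows "w00 * (h00 * k00) + w01 * (h01 * k01) + w10 * (h10 * k10) + w11 * (h11 * k11)
    - (w00 * h00 + w01 * h01 + w10 * h10 + w11 * h11) * (w00 * k00 + w01 * k01 + w10 * k10 + w11 * k11)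
    \<le> 8 * (\<beta> * (1 - \<beta>))"
proof -
  have w: "w00 \<ge> 0" "w01 \<ge> 0" "w10 \<ge> 0" "w11 \<ge> 0" using b unfolding w00_def w01_def w10_def w11_def by auto
  have ws: "w00 + w01 + w10 + w11 = 1" unfolding w00_def w01_def w10_def w11_def by (simp add: algebra_simps)
  define D where "D a b c d = (a - b) * (c - d)" for a b c d :: real
  have D: "D a b c d \<le> 4" if "\<bar>a\<bar> \<le> 1" "\<bar>b\<bar> \<le> 1" "\<bar>c\<bar> \<le> 1" "\<bar>d\<bar> \<le> 1" for a b c d
  proof -
    have "D a b c d \<le> \<bar>a - b\<bar> * \<bar>c - d\<bar>" unfolding D_def by (simp add: abs_mult[symmetric])
    also have "\<dots> \<le> 2 * 2" using that by (intro mult_mono) auto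
    finally show ?thesis by simp
  qed
  have "w00 * (h00 * k00) + w01 * (h01 * k01) + w10 * (h10 * k10) + w11 * (h11 * k11)
    - (w00 * h00 + w01 * h01 + w10 * h10 + w11 * h11) * (w00 * k00 + w01 * k01 + w10 * k10 + w11 * k11)
     = w00 * w01 * D h00 h01 k00 k01 + w00 * w10 * D h00 h10 k00 k10 + w00 * w11 * D h00 h11 k00 k11
     + w01 * w10 * D h01 h10 k01 k10 + w01 * w11 * D h01 h11 k01 k11 + w10 * w11 * D h10 h11 k10 k11"
  proof -
    have "w00 * (h00 * k00) + w01 * (h01 * k01) + w10 * (h10 * k10) + w11 * (h11 * k11)
      = (w00 + w01 + w10 + w11) * (w00 * (h00 * k00) + w01 * (h01 * k01) + w10 * (h10 * k10) + w11 * (h11 * k11))"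
      using ws by simp
    then show ?thesis unfolding D_def by (simp add: algebra_simps)
  qed
  also have "\<dots> \<le> w00 * w01 * 4 + w00 * w10 * 4 + w00 * w11 * 4 + w01 * w10 * 4 + w01 * w11 * 4 + w10 * w11 * 4"
    using w h k by (intro add_mono mult_left_mono D) auto
  also have "\<dots> = 8 * (\<beta> * (1 - \<beta>)) * (1 - \<beta> * (1 - \<beta>))"
    unfolding w00_def w01_def w10_def w11_def by (simp add: algebra_simps)
  also have "\<dots> \<le> 8 * (\<beta> * (1 - \<beta>))"
    using b by (simp add: mult_left_le mult_le_one)
  finally show ?thesis .
qed

lemma four_branch_correlation_bound:
  fixes \<beta> \<mu> \<eta> h00 h01 h10 h11 k00 k01 k10 k11 :: real
  assumes b: "0 \<le> \<beta>" "\<beta> \<le> 1" and mu: "\<bar>\<mu>\<bar> \<le> 1" and et: "\<eta> \<ge> 0"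
    and h: "\<bar>h00\<bar> \<le> 1" "\<bar>h01\<bar> \<le> 1" "\<bar>h10\<bar> \<le> 1" "\<bar>h11\<bar> \<le> 1"
    and k: "\<bar>k00\<bar> \<le> 1" "\<bar>k01\<bar> \<le> 1" "\<bar>k10\<bar> \<le> 1" "\<bar>k11\<bar> \<le> 1"
  defines "w00 \<equiv> \<beta> * \<beta>" and "w01 \<equiv> \<beta> * (1 - \<beta>)" and "w10 \<equiv> (1 - \<beta>) * \<beta>" and "w11 \<equiv> (1 - \<beta>) * (1 - \<beta>)"
  assumes s1: "\<bar>w00 * h00 + w01 * h01 + w10 * h10 + w11 * h11 - \<mu>\<bar> \<le> \<eta>"
    and s2: "\<bar>w00 * k00 + w01 * k01 + w10 * k10 + w11 * k11 - \<mu>\<bar> \<le> \<eta>"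
    and s3: "\<bar>w00 * (h00 * k00) + w01 * (h01 * k01) + w10 * (h10 * k10) + w11 * (h11 * k11) - 1\<bar> \<le> \<eta>"
  shows "1 - \<mu> * \<mu> \<le> 8 * (\<beta> * (1 - \<beta>)) + 3 * \<eta>"
proof -
  have "\<bar>w00 * k00 + w01 * k01 + w10 * k10 + w11 * k11\<bar> \<le> 1"
  proof -
    have w: "w00 \<ge> 0" "w01 \<ge> 0" "w10 \<ge> 0" "w11 \<ge> 0" using b unfolding w00_def w01_def w10_def w11_def by auto
    have "\<bar>w00 * k00 + w01 * k01 + w10 * k10 + w11 * k11\<bar> \<le> w00 * \<bar>k00\<bar> + w01 * \<bar>k01\<bar> + w10 * \<bar>k10\<bar> + w11 * \<bar>k11\<bar>"
      using w by (simp add: abs_mult abs_triangle_ineq order_trans[OF abs_triangle_ineq])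
    also have "\<dots> \<le> w00 * 1 + w01 * 1 + w10 * 1 + w11 * 1"
      using w k by (intro add_mono mult_left_mono) auto
    finally show ?thesis unfolding w00_def w01_def w10_def w11_def by (simp add: algebra_simps)
  qed
  then have "\<bar>(w00 * h00 + w01 * h01 + w10 * h10 + w11 * h11) * (w00 * k00 + w01 * k01 + w10 * k10 + w11 * k11)
    - \<mu> * \<mu>\<bar> \<le> 2 * \<eta>"
    using abs_mult_sub_sq_le[OF s1 s2 _ mu] by blast
  then show ?thesis
    using four_point_covariance_le[OF b h k] s3 unfolding w00_def w01_def w10_def w11_def by linarith
qed

section \<open>Light cones of a shallow circuit on a CAT state\<close>

lemma exists_not_in_interval:
  assumes "finite X" "card X < n"
  shows "\<exists>k. lo \<le> k \<and> k < lo + n \<and> k \<notin> X"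
proof (rule ccontr)
  assume "\<not> ?thesis"
  then have "{lo..<lo+n} \<subseteq> X" by auto
  then have "card {lo..<lo+n} \<le> card X" by (rule card_mono[OF assms(1)])
  with assms(2) show False by simp
qed

context
  fixes n :: nat and C :: circuit and \<alpha> \<beta> \<eta> :: real
  assumes n_pos: "n \<ge> 1" and valid: "valid_circuit (2*n) C" and shallow: "2 * 4 ^ length C < n"
    and alpha: "\<alpha> \<in> {0..1}" and beta: "\<beta> \<in> {0..1}"
    and close: "\<And>O'. is_unitary (2^(2*n)) O' \<Longrightarrow>
       cmod (expect (circuit_mat (2*n) C *\<^sub>v cat_vec \<alpha> (2*n)) O' - expect (cat_pair_vec \<beta> n) O') \<le> \<eta>"
begin

abbreviation W :: "complex mat" where
  "W \<equiv> circuit_mat (2*n) C"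

abbreviation out_state :: "complex vec" where
  "out_state \<equiv> W *\<^sub>v cat_vec \<alpha> (2*n)"

lemma eta_nonneg: "\<eta> \<ge> 0"
  using close[OF unitary_one] norm_ge_zero order_trans by blast

lemma unitary_W: "is_unitary (2^(2*n)) W"
  by (rule unitary_circuit_mat[OF valid])

lemma adj_W_W: "adj W * W = 1\<^sub>m (2^(2*n))"
  using unitary_W by (rule unitary_adj_mult)

lemma W_adj_W: "W * adj W = 1\<^sub>m (2^(2*n))"
  using unitary_W by (rule unitary_mult_adj)

lemma cone_card_bounds:
  shows "finite (backward_cone C {q}) \<and> card (backward_cone C {q}) \<le> 2 ^ length C"
    and "finite (forward_cone C {q}) \<and> card (forward_cone C {q}) \<le> 2 ^ length C"
    and "finite (forward_cone C (backward_cone C {q})) \<and> card (forward_cone C (backward_cone C {q})) \<le> 4 ^ length C"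
    and "finite (backward_cone C (forward_cone C {q})) \<and> card (backward_cone C (forward_cone C {q})) \<le> 4 ^ length C"
proof -
  have pow: "(2::nat) ^ length C * 2 ^ length C = 4 ^ length C"
    by (simp add: power_mult_distrib[symmetric])
  show b: "finite (backward_cone C {q}) \<and> card (backward_cone C {q}) \<le> 2 ^ length C"
    and f: "finite (forward_cone C {q}) \<and> card (forward_cone C {q}) \<le> 2 ^ length C"
    using card_backward_cone[OF valid, of "{q}"] card_forward_cone[OF valid, of "{q}"] by auto
  have "card (forward_cone C (backward_cone C {q})) \<le> 2 ^ length C * card (backward_cone C {q})"
    using card_forward_cone[OF valid] b by blast
  also have "\<dots> \<le> 4 ^ length C" using b pow by (metis mult_le_mono2)
  finally show "finite (forward_cone C (backward_cone C {q})) \<and> card (forward_cone C (backward_cone C {q})) \<le> 4 ^ length C"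
    using card_forward_cone[OF valid] b by blast
  have "card (backward_cone C (forward_cone C {q})) \<le> 2 ^ length C * card (forward_cone C {q})"
    using card_backward_cone[OF valid] f by blast
  also have "\<dots> \<le> 4 ^ length C" using f pow by (metis mult_le_mono2)
  finally show "finite (backward_cone C (forward_cone C {q})) \<and> card (backward_cone C (forward_cone C {q})) \<le> 4 ^ length C"
    using card_backward_cone[OF valid] f by blast
qed

lemma exists_qubits_outside:
  assumes "finite A" "finite B" "card A \<le> 2 ^ length C" "card B \<le> 2 ^ length C"
  obtains k1 k2 where "n \<le> k1" "k1 < 2 * n" "k1 \<notin> A \<union> B" "k2 < n" "k2 \<notin> A \<union> B"
proof -
  have "(2::nat) ^ length C \<le> 4 ^ length C" by (simp add: power_mono)
  moreover have "card (A \<union> B) \<le> card A + card B" by (rule card_Un_le)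
  ultimately have c: "card (A \<union> B) < n" using assms shallow by linarith
  obtain k1 where "n \<le> k1" "k1 < n + n" "k1 \<notin> A \<union> B"
    using exists_not_in_interval[OF _ c, of n] assms by auto
  moreover obtain k2 where "k2 < n" "k2 \<notin> A \<union> B"
    using exists_not_in_interval[OF _ c, of 0] assms by auto
  ultimately show ?thesis using that by auto
qed

lemma disjoint_backward_cones:
  "q \<notin> forward_cone C (backward_cone C {p}) \<Longrightarrow> backward_cone C {q} \<inter> backward_cone C {p} = {}"
  using backward_cone_meets_iff[of C "{q}" "backward_cone C {p}"] by auto

lemma disjoint_forward_cones:
  "q \<notin> backward_cone C (forward_cone C {p}) \<Longrightarrow> forward_cone C {p} \<inter> forward_cone C {q} = {}"
  using backward_cone_meets_iff[of C "forward_cone C {p}" "{q}"] by auto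

text \<open>\<open>out_bias q x\<close> is the expectation of \<open>Z\<^sub>q\<close> on the output when the input is the basis
  state \<open>x\<close>; only \<open>x = 0\<close> and \<open>x = ones (2 * n)\<close> matter for a CAT input.\<close>

definition out_bias :: "nat \<Rightarrow> nat \<Rightarrow> real" where
  "out_bias q x = Re ((adj W * pauli_z (2*n) q * W) $$ (x,x))"

lemma acts_on_heisenberg_pauli_z: "acts_on (2*n) (backward_cone C {q}) (adj W * pauli_z (2*n) q * W)"
  by (rule acts_on_conj_circuit[OF valid acts_on_pauli_z])

lemma heisenberg_pauli_z_diag:
  assumes "x < 2^(2*n)"
  shows "(adj W * pauli_z (2*n) q * W) $$ (x,x) = of_real (out_bias q x)" "\<bar>out_bias q x\<bar> \<le> 1"
  using diag_conj_pauli_z[OF circuit_mat_carrier adj_W_W assms] unfolding out_bias_def by auto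

lemma expect_out_state_pauli_zz:
  assumes disj: "backward_cone C {q} \<inter> backward_cone C {q'} = {}"
  shows "expect out_state (pauli_z (2*n) q * pauli_z (2*n) q')
     = of_real (\<alpha> * (out_bias q 0 * out_bias q' 0) + (1 - \<alpha>) * (out_bias q (ones (2*n)) * out_bias q' (ones (2*n))))"
proof -
  let ?M = "\<lambda>q. adj W * pauli_z (2*n) q * W"
  have "expect out_state (pauli_z (2*n) q * pauli_z (2*n) q') = expect (cat_vec \<alpha> (2*n)) (?M q * ?M q')"
    using expect_mult_mat_vec[OF circuit_mat_carrier cat_vec_carrier mult_carrier_mat[OF pauli_z_carrier pauli_z_carrier]]
      conj_mult_distrib[OF circuit_mat_carrier W_adj_W pauli_z_carrier pauli_z_carrier] by simp
  also obtain k where "k < 2*n" "k \<notin> backward_cone C {q} \<union> backward_cone C {q'}"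
    using exists_qubits_outside cone_card_bounds(1) by (metis less_le_trans mult_2 le_add2)
  then have "expect (cat_vec \<alpha> (2*n)) (?M q * ?M q')
     = of_real \<alpha> * (?M q * ?M q') $$ (0,0) + of_real (1 - \<alpha>) * (?M q * ?M q') $$ (ones (2*n), ones (2*n))"
    using expect_cat_vec_acts_on[OF _ alpha acts_on_mult[OF acts_on_heisenberg_pauli_z acts_on_heisenberg_pauli_z]] n_pos
    by simp
  moreover have "(0::nat) < 2^(2*n)" by simp
  note diag = diag_entry_mult_disjoint[OF acts_on_heisenberg_pauli_z acts_on_heisenberg_pauli_z disj this]
    diag_entry_mult_disjoint[OF acts_on_heisenberg_pauli_z acts_on_heisenberg_pauli_z disj ones_less]
  ultimately show ?thesis
    using heisenberg_pauli_z_diag[OF \<open>0 < 2^(2*n)\<close>] heisenberg_pauli_z_diag[OF ones_less] by (simp add: diag)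
qed

lemma out_bias_single:
  assumes "q < 2*n"
  shows "\<bar>\<alpha> * out_bias q 0 + (1 - \<alpha>) * out_bias q (ones (2*n)) - (2*\<beta> - 1)\<bar> \<le> \<eta>"
proof -
  obtain k where "k < 2*n" "k \<notin> backward_cone C {q}"
    using exists_qubits_outside cone_card_bounds(1) by (metis Un_absorb less_le_trans mult_2 le_add2)
  then have "expect out_state (pauli_z (2*n) q) = of_real (\<alpha> * out_bias q 0 + (1 - \<alpha>) * out_bias q (ones (2*n)))"
    using expect_mult_mat_vec[OF circuit_mat_carrier cat_vec_carrier pauli_z_carrier]
      expect_cat_vec_acts_on[OF _ alpha acts_on_heisenberg_pauli_z] n_pos
      heisenberg_pauli_z_diag[of 0] heisenberg_pauli_z_diag[OF ones_less] by simp
  then show ?thesis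
    using close[OF unitary_pauli_z, of q] expect_cat_pair_vec_pauli_z[OF n_pos beta assms]
    by (intro cmod_of_real_diff_le) simp
qed

lemma out_bias_pair_same_half:
  assumes "q < 2*n" "q' < 2*n" "q < n \<longleftrightarrow> q' < n" "backward_cone C {q} \<inter> backward_cone C {q'} = {}"
  shows "\<bar>\<alpha> * (out_bias q 0 * out_bias q' 0) + (1 - \<alpha>) * (out_bias q (ones (2*n)) * out_bias q' (ones (2*n))) - 1\<bar> \<le> \<eta>"
  using close[OF unitary_mult[OF unitary_pauli_z unitary_pauli_z], of q q'] expect_out_state_pauli_zz[OF assms(4)]
    expect_cat_pair_vec_pauli_zz_same_half[OF n_pos beta assms(1-3)] by (intro cmod_of_real_diff_le) simp

lemma out_bias_pair_cross:
  assumes "n \<le> q" "q < 2*n" "q' < n" "backward_cone C {q} \<inter> backward_cone C {q'} = {}"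
  shows "\<bar>\<alpha> * (out_bias q 0 * out_bias q' 0) + (1 - \<alpha>) * (out_bias q (ones (2*n)) * out_bias q' (ones (2*n)))
    - (2*\<beta> - 1) * (2*\<beta> - 1)\<bar> \<le> \<eta>"
  using close[OF unitary_mult[OF unitary_pauli_z unitary_pauli_z], of q q'] expect_out_state_pauli_zz[OF assms(4)]
    expect_cat_pair_vec_pauli_zz_cross[OF n_pos beta assms(1-3)] by (intro cmod_of_real_diff_le) simp

text \<open>Output qubits \<open>n, a'\<close> of the second half and \<open>b, b'\<close> of the first half, chosen so that the
  backward cones of the four compared pairs are disjoint.\<close>

lemma output_bias_bound: "1 - (2*\<beta> - 1) * (2*\<beta> - 1) \<le> 6 * \<eta>"
proof -
  let ?A = "forward_cone C (backward_cone C {n})"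
  have A: "finite ?A" "card ?A < n" using cone_card_bounds(3)[of n] shallow by auto
  obtain a' where a': "n \<le> a'" "a' < n + n" "a' \<notin> ?A" using exists_not_in_interval[OF A, of n] by auto
  obtain b where b: "b < n" "b \<notin> ?A" using exists_not_in_interval[OF A, of 0] by auto
  let ?B = "forward_cone C (backward_cone C {b}) \<union> forward_cone C (backward_cone C {a'})"
  have "card ?B \<le> 4 ^ length C + 4 ^ length C"
    using card_Un_le[of "forward_cone C (backward_cone C {b})" "forward_cone C (backward_cone C {a'})"]
      cone_card_bounds(3)[of b] cone_card_bounds(3)[of a']
    by linarith
  then have B: "finite ?B" "card ?B < n" using shallow cone_card_bounds(3) by auto
  obtain b' where b': "b' < n" "b' \<notin> ?B" using exists_not_in_interval[OF B, of 0] by auto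
  have q: "n < 2*n" "a' < 2*n" "b < 2*n" "b' < 2*n" using n_pos a' b b' by auto
  show ?thesis
  proof (rule two_branch_correlation_bound)
    show "0 \<le> \<alpha>" "\<alpha> \<le> 1" "0 \<le> \<eta>" "\<bar>2 * \<beta> - 1\<bar> \<le> 1" using alpha beta eta_nonneg by auto
    show "\<bar>out_bias n 0\<bar> \<le> 1" "\<bar>out_bias n (ones (2*n))\<bar> \<le> 1"
      "\<bar>out_bias a' 0\<bar> \<le> 1" "\<bar>out_bias a' (ones (2*n))\<bar> \<le> 1"
      "\<bar>out_bias b 0\<bar> \<le> 1" "\<bar>out_bias b (ones (2*n))\<bar> \<le> 1"
      "\<bar>out_bias b' 0\<bar> \<le> 1" "\<bar>out_bias b' (ones (2*n))\<bar> \<le> 1"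
      using heisenberg_pauli_z_diag(2) ones_less by auto
    show "\<bar>\<alpha> * out_bias n 0 + (1 - \<alpha>) * out_bias n (ones (2*n)) - (2 * \<beta> - 1)\<bar> \<le> \<eta>"
      "\<bar>\<alpha> * out_bias a' 0 + (1 - \<alpha>) * out_bias a' (ones (2*n)) - (2 * \<beta> - 1)\<bar> \<le> \<eta>"
      "\<bar>\<alpha> * out_bias b 0 + (1 - \<alpha>) * out_bias b (ones (2*n)) - (2 * \<beta> - 1)\<bar> \<le> \<eta>"
      "\<bar>\<alpha> * out_bias b' 0 + (1 - \<alpha>) * out_bias b' (ones (2*n)) - (2 * \<beta> - 1)\<bar> \<le> \<eta>"
      using out_bias_single q by auto
    show "\<bar>\<alpha> * (out_bias n 0 * out_bias a' 0) + (1 - \<alpha>) * (out_bias n (ones (2*n)) * out_bias a' (ones (2*n))) - 1\<bar> \<le> \<eta>"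
      by (rule out_bias_pair_same_half) (use q a' disjoint_backward_cones[OF a'(3)] in auto)
    show "\<bar>\<alpha> * (out_bias b 0 * out_bias b' 0) + (1 - \<alpha>) * (out_bias b (ones (2*n)) * out_bias b' (ones (2*n))) - 1\<bar> \<le> \<eta>"
      by (rule out_bias_pair_same_half) (use q b b' disjoint_backward_cones[of b' b] in auto)
    show "\<bar>\<alpha> * (out_bias n 0 * out_bias b 0) + (1 - \<alpha>) * (out_bias n (ones (2*n)) * out_bias b (ones (2*n)))
        - (2 * \<beta> - 1) * (2 * \<beta> - 1)\<bar> \<le> \<eta>"
      by (rule out_bias_pair_cross) (use q b disjoint_backward_cones[OF b(2)] in auto)
    show "\<bar>\<alpha> * (out_bias a' 0 * out_bias b' 0) + (1 - \<alpha>) * (out_bias a' (ones (2*n)) * out_bias b' (ones (2*n)))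
        - (2 * \<beta> - 1) * (2 * \<beta> - 1)\<bar> \<le> \<eta>"
      by (rule out_bias_pair_cross) (use q a' b' disjoint_backward_cones[of b' a'] in auto)
  qed
qed

definition in_bias :: "nat \<Rightarrow> nat \<Rightarrow> real" where
  "in_bias q u = Re ((W * pauli_z (2*n) q * adj W) $$ (u,u))"

lemma acts_on_schroedinger_pauli_z: "acts_on (2*n) (forward_cone C {q}) (W * pauli_z (2*n) q * adj W)"
  by (rule acts_on_conj_adj_circuit[OF valid acts_on_pauli_z])

lemma schroedinger_pauli_z_diag:
  assumes "u < 2^(2*n)"
  shows "(W * pauli_z (2*n) q * adj W) $$ (u,u) = of_real (in_bias q u)" "\<bar>in_bias q u\<bar> \<le> 1"
proof -
  have "adj (adj W) * adj W = 1\<^sub>m (2^(2*n))" using W_adj_W by simp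
  from diag_conj_pauli_z[OF adj_carrier[OF circuit_mat_carrier] this assms, of q]
  show "(W * pauli_z (2*n) q * adj W) $$ (u,u) = of_real (in_bias q u)" "\<bar>in_bias q u\<bar> \<le> 1"
    by (auto simp: in_bias_def)
qed

abbreviation cat_pair_mixture :: "(nat \<Rightarrow> real) \<Rightarrow> real" where
  "cat_pair_mixture f \<equiv> \<beta> * \<beta> * f (pair_idx n 0 0) + \<beta> * (1 - \<beta>) * f (pair_idx n 0 (ones n))
     + (1 - \<beta>) * \<beta> * f (pair_idx n (ones n) 0) + (1 - \<beta>) * (1 - \<beta>) * f (pair_idx n (ones n) (ones n))"

lemma expect_cat_pair_vec_real_diag:
  assumes M: "acts_on (2*n) S M" and diag: "\<And>u. u < 2^(2*n) \<Longrightarrow> M $$ (u,u) = of_real (f u)"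
    and k: "n \<le> k1" "k1 < 2*n" "k1 \<notin> S" "k2 < n" "k2 \<notin> S"
  shows "expect (cat_pair_vec \<beta> n) M = of_real (cat_pair_mixture f)"
  using expect_cat_pair_vec_acts_on[OF n_pos beta M k] diag pair_idx_ones_less by simp

lemma in_bias_single:
  assumes "q < 2*n" and k: "n \<le> k1" "k1 < 2*n" "k1 \<notin> forward_cone C {q}" "k2 < n" "k2 \<notin> forward_cone C {q}"
  shows "\<bar>(2*\<alpha> - 1) - cat_pair_mixture (in_bias q)\<bar> \<le> \<eta>"
proof -
  have "expect out_state (W * pauli_z (2*n) q * adj W) = of_real (2*\<alpha> - 1)"
    using expect_mult_mat_vec_conj[OF circuit_mat_carrier adj_W_W cat_vec_carrier pauli_z_carrier]
      expect_cat_vec_pauli_z[OF _ alpha assms(1)] n_pos by simp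
  moreover have "expect (cat_pair_vec \<beta> n) (W * pauli_z (2*n) q * adj W) = of_real (cat_pair_mixture (in_bias q))"
    by (rule expect_cat_pair_vec_real_diag[OF acts_on_schroedinger_pauli_z schroedinger_pauli_z_diag(1) k])
  ultimately show ?thesis
    using close[OF unitary_conj[OF unitary_W unitary_pauli_z], of q]
    by (intro cmod_of_real_diff_le) simp
qed

lemma in_bias_pair:
  assumes q: "q < 2*n" "q' < 2*n" and disj: "forward_cone C {q} \<inter> forward_cone C {q'} = {}"
    and k: "n \<le> k1" "k1 < 2*n" "k1 \<notin> forward_cone C {q} \<union> forward_cone C {q'}"
      "k2 < n" "k2 \<notin> forward_cone C {q} \<union> forward_cone C {q'}"
  shows "\<bar>1 - cat_pair_mixture (\<lambda>u. in_bias q u * in_bias q' u)\<bar> \<le> \<eta>"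
proof -
  let ?N = "\<lambda>q. W * pauli_z (2*n) q * adj W"
  have prod: "?N q * ?N q' = W * (pauli_z (2*n) q * pauli_z (2*n) q') * adj W"
    using conj_mult_distrib[OF adj_carrier[OF circuit_mat_carrier] _ pauli_z_carrier pauli_z_carrier] adj_W_W
    by simp
  have "expect out_state (?N q * ?N q') = 1"
    unfolding prod using expect_mult_mat_vec_conj[OF circuit_mat_carrier adj_W_W cat_vec_carrier
      mult_carrier_mat[OF pauli_z_carrier pauli_z_carrier]] expect_cat_vec_pauli_zz[OF _ alpha q] n_pos by simp
  moreover have "expect (cat_pair_vec \<beta> n) (?N q * ?N q') = of_real (cat_pair_mixture (\<lambda>u. in_bias q u * in_bias q' u))"
  proof (rule expect_cat_pair_vec_real_diag[OF acts_on_mult[OF acts_on_schroedinger_pauli_z acts_on_schroedinger_pauli_z] _ k])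
    show "(?N q * ?N q') $$ (u,u) = of_real (in_bias q u * in_bias q' u)" if "u < 2^(2*n)" for u
      using diag_entry_mult_disjoint[OF acts_on_schroedinger_pauli_z acts_on_schroedinger_pauli_z disj that]
        schroedinger_pauli_z_diag(1)[OF that] by simp
  qed
  ultimately show ?thesis
    using close[OF unitary_mult[OF unitary_conj[OF unitary_W unitary_pauli_z] unitary_conj[OF unitary_W unitary_pauli_z]],
      of q q'] by (intro cmod_of_real_diff_le) simp
qed

text \<open>Input qubits \<open>0\<close> and \<open>p\<close> with disjoint forward cones, both missed by some qubit of each half.\<close>

lemma input_bias_bound: "1 - (2*\<alpha> - 1) * (2*\<alpha> - 1) \<le> 8 * (\<beta> * (1 - \<beta>)) + 3 * \<eta>"
proof -
  let ?X = "backward_cone C (forward_cone C {0})"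
  have X: "finite ?X" "card ?X < n" using cone_card_bounds(4)[of 0] shallow by auto
  obtain p where p: "p < n" "p \<notin> ?X" using exists_not_in_interval[OF X, of 0] by auto
  have disj: "forward_cone C {0} \<inter> forward_cone C {p} = {}" by (rule disjoint_forward_cones[OF p(2)])
  obtain k1 k2 where k: "n \<le> k1" "k1 < 2*n" "k1 \<notin> forward_cone C {0} \<union> forward_cone C {p}"
      "k2 < n" "k2 \<notin> forward_cone C {0} \<union> forward_cone C {p}"
    using exists_qubits_outside[of "forward_cone C {0}" "forward_cone C {p}"] cone_card_bounds(2) by blast
  have q: "0 < 2*n" "p < 2*n" using n_pos p by auto
  have k0: "k1 \<notin> forward_cone C {0}" "k2 \<notin> forward_cone C {0}"
    and kp: "k1 \<notin> forward_cone C {p}" "k2 \<notin> forward_cone C {p}" using k by auto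
  show ?thesis
  proof (rule four_branch_correlation_bound)
    show "0 \<le> \<beta>" "\<beta> \<le> 1" "0 \<le> \<eta>" "\<bar>2 * \<alpha> - 1\<bar> \<le> 1" using alpha beta eta_nonneg by auto
    show "\<bar>in_bias 0 (pair_idx n 0 0)\<bar> \<le> 1" "\<bar>in_bias 0 (pair_idx n 0 (ones n))\<bar> \<le> 1"
      "\<bar>in_bias 0 (pair_idx n (ones n) 0)\<bar> \<le> 1" "\<bar>in_bias 0 (pair_idx n (ones n) (ones n))\<bar> \<le> 1"
      "\<bar>in_bias p (pair_idx n 0 0)\<bar> \<le> 1" "\<bar>in_bias p (pair_idx n 0 (ones n))\<bar> \<le> 1"
      "\<bar>in_bias p (pair_idx n (ones n) 0)\<bar> \<le> 1" "\<bar>in_bias p (pair_idx n (ones n) (ones n))\<bar> \<le> 1"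
      using schroedinger_pauli_z_diag(2) pair_idx_ones_less by auto
  qed (use in_bias_single[OF q(1) k(1,2) k0(1) k(4) k0(2)] in_bias_single[OF q(2) k(1,2) kp(1) k(4) kp(2)]
      in_bias_pair[OF q disj k] in \<open>simp_all add: abs_minus_commute\<close>)
qed

lemma cat_parameters_small: "\<beta> * (1 - \<beta>) \<le> 2 * \<eta> \<and> \<alpha> * (1 - \<alpha>) \<le> 4 * \<eta>"
proof -
  have "1 - (2*\<beta> - 1) * (2*\<beta> - 1) = 4 * (\<beta> * (1 - \<beta>))" "1 - (2*\<alpha> - 1) * (2*\<alpha> - 1) = 4 * (\<alpha> * (1 - \<alpha>))"
    by (simp_all add: algebra_simps)
  then show ?thesis using output_bias_bound input_bias_bound eta_nonneg by linarith
qed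

end

section \<open>Binary entropy near the endpoints\<close>

lemma ln_4_gt_1: "ln (4::real) > 1"
proof -
  have "exp 1 < (4::real)" using exp_le by simp
  then have "ln (exp 1) < ln (4::real)" by (subst ln_less_cancel_iff) auto
  then show ?thesis by simp
qed

lemma neg_mult_ln_le_powr:
  fixes x s :: real
  assumes "0 < x" "x \<le> 1" "0 < s" "s < 1"
  shows "- x * ln x \<le> x powr s / (1 - s)"
proof -
  have "ln (x powr (s - 1)) \<le> x powr (s - 1) - 1" by (rule ln_le_minus_one) (use assms in simp)
  then have "- ln x \<le> x powr (s - 1) / (1 - s)" using assms by (simp add: field_simps)
  then have "x * (- ln x) \<le> x * (x powr (s - 1) / (1 - s))" using assms by (intro mult_left_mono) auto
  also have "\<dots> = x powr s / (1 - s)" using powr_add[of x 1 "s - 1"] assms(1) by simp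
  finally show ?thesis by simp
qed

lemma neg_one_minus_mult_ln_le:
  fixes x :: real
  assumes "0 < x" "x < 1"
  shows "- (1 - x) * ln (1 - x) \<le> x"
proof -
  have "ln (1 / (1 - x)) \<le> 1 / (1 - x) - 1" using assms by (intro ln_le_minus_one) auto
  then have "- ln (1 - x) \<le> x / (1 - x)" using assms by (simp add: ln_div field_simps)
  then have "(1 - x) * (- ln (1 - x)) \<le> (1 - x) * (x / (1 - x))" using assms by (intro mult_left_mono) auto
  then have "(1 - x) * (- ln (1 - x)) \<le> x" using assms by simp
  then show ?thesis by (simp only: mult_minus_left mult_minus_right)
qed

lemma bin_entropy_le_powr_half:
  assumes x: "0 < x" "x \<le> 1/2" and s: "0 < s" "s < 1"
  shows "bin_entropy x \<le> 2 * (1 / (1 - s) + 1) / ln 2 * (x * (1 - x)) powr s"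
proof -
  have H: "bin_entropy x = (- x * ln x + - (1 - x) * ln (1 - x)) / ln 2"
    using x by (simp add: bin_entropy_def log_def field_simps)
  have "x powr 1 \<le> x powr s" using x s by (intro powr_mono') auto
  then have "- x * ln x + - (1 - x) * ln (1 - x) \<le> x powr s / (1 - s) + x powr s"
    using neg_mult_ln_le_powr[of x s] neg_one_minus_mult_ln_le[of x] x s by simp
  also have "\<dots> = x powr s * (1 / (1 - s) + 1)" by (simp add: algebra_simps)
  also have "x powr s \<le> (2 * (x * (1 - x))) powr s"
    using x s by (intro powr_mono2) (auto simp: field_simps)
  also have "(2 * (x * (1 - x))) powr s \<le> 2 * (x * (1 - x)) powr s"
    using x s powr_mono[of s 1 2] by (simp add: powr_mult mult_right_mono)
  finally have "- x * ln x + - (1 - x) * ln (1 - x) \<le> 2 * (x * (1 - x)) powr s * (1 / (1 - s) + 1)"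
    using s by (simp add: mult_right_mono)
  also have "\<dots> = 2 * (1 / (1 - s) + 1) * (x * (1 - x)) powr s" by (simp add: mult_ac)
  finally have "(- x * ln x + - (1 - x) * ln (1 - x)) / ln 2 \<le> 2 * (1 / (1 - s) + 1) * (x * (1 - x)) powr s / ln 2"
    by (rule divide_right_mono) simp
  then show ?thesis unfolding H by simp
qed

text \<open>The theorem uses \<open>s = 1 / ln 4\<close>, for which raising the bound to the power \<open>ln 4\<close> gives back
  \<open>x (1 - x)\<close>.\<close>

lemma bin_entropy_le_powr:
  assumes x: "0 \<le> x" "x \<le> 1" and s: "0 < s" "s < 1"
  shows "bin_entropy x \<le> 2 * (1 / (1 - s) + 1) / ln 2 * (x * (1 - x)) powr s"
proof (cases "x = 0 \<or> x = 1")
  case True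
  then show ?thesis by (auto simp: bin_entropy_def)
next
  case False
  then have x': "0 < x" "x < 1" using x by auto
  show ?thesis
  proof (cases "x \<le> 1/2")
    case True
    then show ?thesis using bin_entropy_le_powr_half[OF _ _ s] x' by auto
  next
    case False
    have "bin_entropy x = bin_entropy (1 - x)" by (simp add: bin_entropy_def algebra_simps)
    also have "\<dots> \<le> 2 * (1 / (1 - s) + 1) / ln 2 * ((1 - x) * (1 - (1 - x))) powr s"
      using bin_entropy_le_powr_half[OF _ _ s, of "1 - x"] x' False by auto
    finally show ?thesis by (simp add: mult.commute)
  qed
qed

lemma bin_entropy_nonneg:
  assumes "0 \<le> x" "x \<le> 1"
  shows "bin_entropy x \<ge> 0"
proof (cases "x = 0 \<or> x = 1")
  case False
  then have x: "0 < x" "x < 1" using assms by auto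
  then have "x * log 2 x \<le> 0" "(1 - x) * log 2 (1 - x) \<le> 0" by (auto simp: mult_nonneg_nonpos)
  then show ?thesis by (simp add: bin_entropy_def)
qed (auto simp: bin_entropy_def)

definition entropy_gap_const :: real where
  "entropy_gap_const = (3 * (2 * (1 / (1 - 1 / ln 4) + 1) / ln 2)) powr ln 4"

lemma entropy_gap_powr_le:
  fixes \<alpha> \<beta> \<epsilon> :: real
  assumes a: "0 \<le> \<alpha>" "\<alpha> \<le> 1" and b: "0 \<le> \<beta>" "\<beta> \<le> 1" and e: "\<epsilon> > 0"
    and pa: "\<alpha> * (1 - \<alpha>) \<le> \<epsilon>" and pb: "\<beta> * (1 - \<beta>) \<le> \<epsilon>"
  shows "\<bar>2 * bin_entropy \<beta> - bin_entropy \<alpha>\<bar> powr (ln 4) \<le> entropy_gap_const * \<epsilon>"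
proof -
  define s :: real where "s = 1 / ln 4"
  define K where "K = 2 * (1 / (1 - s) + 1) / ln 2"
  have s: "0 < s" "s < 1" "s * ln 4 = 1" using ln_4_gt_1 by (auto simp: s_def)
  have K: "K > 0" unfolding K_def using s by (intro divide_pos_pos mult_pos_pos add_pos_pos) auto
  have H: "0 \<le> bin_entropy \<gamma> \<and> bin_entropy \<gamma> \<le> K * \<epsilon> powr s"
    if "0 \<le> \<gamma>" "\<gamma> \<le> 1" "\<gamma> * (1 - \<gamma>) \<le> \<epsilon>" for \<gamma>
  proof -
    have "(\<gamma> * (1 - \<gamma>)) powr s \<le> \<epsilon> powr s" using that s by (intro powr_mono2) auto
    then have "K * (\<gamma> * (1 - \<gamma>)) powr s \<le> K * \<epsilon> powr s" using K by (intro mult_left_mono) auto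
    then show ?thesis
      using bin_entropy_nonneg[OF that(1,2)] bin_entropy_le_powr[OF that(1,2) s(1,2), folded K_def] by linarith
  qed
  have "\<bar>2 * bin_entropy \<beta> - bin_entropy \<alpha>\<bar> \<le> 3 * K * \<epsilon> powr s"
    using H[OF a pa] H[OF b pb] by linarith
  then have "\<bar>2 * bin_entropy \<beta> - bin_entropy \<alpha>\<bar> powr (ln 4) \<le> (3 * K * \<epsilon> powr s) powr (ln 4)"
    using ln_4_gt_1 by (intro powr_mono2) auto
  also have "\<dots> = (3 * K) powr (ln 4) * \<epsilon>"
    using K e s by (simp add: powr_mult powr_powr)
  finally show ?thesis by (simp add: entropy_gap_const_def K_def s_def)
qed

lemma depth_ge_if_not_shallow:
  fixes L :: real and n d :: nat
  assumes L: "L \<ge> 3" "L \<le> real n" and nd: "\<not> 2 * 4 ^ d < n"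
  shows "1 / (2 * ln 4) * ln L \<le> real d"
proof -
  have "d \<ge> 1" using L nd by (cases d) auto
  have "real n \<le> real (2 * 4 ^ d)" using nd by (simp only: of_nat_le_iff not_less)
  then have "L \<le> 2 * 4 ^ d" using L by simp
  then have "ln L \<le> ln (2 * 4 ^ d)" using L by (subst ln_le_cancel_iff) auto
  also have "\<dots> = ln 2 + real d * ln 4" by (simp add: ln_mult ln_realpow)
  also have "ln (2::real) \<le> 1 * ln 4" by simp
  also have "\<dots> \<le> real d * ln 4" using \<open>d \<ge> 1\<close> ln_4_gt_1 by (intro mult_right_mono) auto
  finally show ?thesis using ln_4_gt_1 by (simp add: field_simps)
qed

lemma circuit_output_density:
  "circuit_mat m U * cat_dm \<alpha> m * adj (circuit_mat m U) = proj (circuit_mat m U *\<^sub>v cat_vec \<alpha> m)"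
  unfolding cat_dm_def by (rule conj_proj[OF circuit_mat_carrier cat_vec_carrier])

lemma sq_norm_circuit_output:
  "valid_circuit m U \<Longrightarrow> m \<ge> 1 \<Longrightarrow> \<alpha> \<in> {0..1} \<Longrightarrow> sq_norm (circuit_mat m U *\<^sub>v cat_vec \<alpha> m) = 1"
  using sq_norm_unitary[OF unitary_circuit_mat cat_vec_carrier] sq_norm_cat_vec by simp

lemma depth_lower_bound_exact:
  assumes n: "real n \<ge> 3" and ab: "\<alpha> \<in> {0..1}" "\<beta> \<in> {0..1}" and U: "valid_circuit (2*n) U"
    and eq: "circuit_mat (2*n) U * cat_dm \<alpha> (2*n) * adj (circuit_mat (2*n) U) = tensor_mat (cat_dm \<beta> n) (cat_dm \<beta> n)"
    and H: "bin_entropy \<alpha> \<noteq> 2 * bin_entropy \<beta>"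
  shows "1 / (2 * ln 4) * ln (real n) \<le> real (depth U)"
proof (cases "2 * 4 ^ length U < n")
  case True
  let ?x = "circuit_mat (2*n) U *\<^sub>v cat_vec \<alpha> (2*n)"
  have n1: "n \<ge> 1" using n by simp
  have "proj ?x = proj (cat_pair_vec \<beta> n)"
    using eq unfolding circuit_output_density tensor_cat_dm_eq_proj .
  then have close: "cmod (expect ?x O' - expect (cat_pair_vec \<beta> n) O') \<le> 0" if "is_unitary (2^(2*n)) O'" for O'
    using expect_eq_if_proj_eq[OF mult_mat_vec_carrier[OF circuit_mat_carrier cat_vec_carrier]
        cat_pair_vec_carrier sq_norm_circuit_output[OF U _ ab(1)] sq_norm_cat_pair_vec[OF n1 ab(2)] that] n1
    by simp
  then have "\<beta> * (1 - \<beta>) \<le> 0" "\<alpha> * (1 - \<alpha>) \<le> 0"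
    using cat_parameters_small[OF n1 U True ab close] by auto
  then have "\<alpha> \<in> {0, 1}" "\<beta> \<in> {0, 1}" using ab by (auto simp: mult_le_0_iff)
  then show ?thesis using H by (auto simp: bin_entropy_def)
next
  case False
  then show ?thesis using depth_ge_if_not_shallow[OF n order.refl] by (simp add: depth_def)
qed

lemma depth_lower_bound_approx:
  fixes n :: nat and \<alpha> \<beta> \<epsilon> L :: real
  defines "L \<equiv> min (real n) (\<bar>2 * bin_entropy \<beta> - bin_entropy \<alpha>\<bar> powr (ln 4) / \<epsilon>)"
  assumes ab: "\<alpha> \<in> {0..1}" "\<beta> \<in> {0..1}" and e: "\<epsilon> > 0" and V: "valid_circuit (2*n) V"
    and close: "trace_norm (circuit_mat (2*n) V * cat_dm \<alpha> (2*n) * adj (circuit_mat (2*n) V)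
        - tensor_mat (cat_dm \<beta> n) (cat_dm \<beta> n)) \<le> \<epsilon>"
    and L: "L \<ge> max 3 (8 * entropy_gap_const + 1)"
  shows "1 / (2 * ln 4) * ln L \<le> real (depth V)"
proof (cases "2 * 4 ^ length V < n")
  case True
  let ?x = "circuit_mat (2*n) V *\<^sub>v cat_vec \<alpha> (2*n)"
  have n1: "n \<ge> 1" using L by (simp add: L_def)
  have close: "cmod (expect ?x O' - expect (cat_pair_vec \<beta> n) O') \<le> 2 * \<epsilon>" if "is_unitary (2^(2*n)) O'" for O'
    using expect_diff_le_trace_norm[OF mult_mat_vec_carrier[OF circuit_mat_carrier cat_vec_carrier]
        cat_pair_vec_carrier sq_norm_circuit_output[OF V _ ab(1)] sq_norm_cat_pair_vec[OF n1 ab(2)] that]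
      close n1 unfolding circuit_output_density tensor_cat_dm_eq_proj by simp
  then have "\<beta> * (1 - \<beta>) \<le> 8 * \<epsilon>" "\<alpha> * (1 - \<alpha>) \<le> 8 * \<epsilon>"
    using cat_parameters_small[OF n1 V True ab close] e by auto
  then have "\<bar>2 * bin_entropy \<beta> - bin_entropy \<alpha>\<bar> powr (ln 4) \<le> entropy_gap_const * (8 * \<epsilon>)"
    using entropy_gap_powr_le ab e by auto
  then have "L \<le> 8 * entropy_gap_const" using e by (simp add: L_def min_le_iff_disj pos_divide_le_eq)
  then show ?thesis using L by linarith
next
  case False
  then show ?thesis using depth_ge_if_not_shallow[of L n] L by (simp add: L_def depth_def)
qed

theorem theorem7p3:
  shows
  "(\<exists>c>0. \<exists>N. \<forall>n \<ge> 2. \<forall>\<alpha> \<beta> :: real. \<forall>U :: circuit.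
      \<alpha> \<in> {0..1} \<longrightarrow> \<beta> \<in> {0..1} \<longrightarrow> real n \<ge> N \<longrightarrow>
      valid_circuit (2*n) U \<longrightarrow>
      circuit_mat (2*n) U * cat_dm \<alpha> (2*n) * adj (circuit_mat (2*n) U)
        = tensor_mat (cat_dm \<beta> n) (cat_dm \<beta> n) \<longrightarrow>
      bin_entropy \<alpha> \<noteq> 2 * bin_entropy \<beta> \<longrightarrow>
      real (depth U) \<ge> c * ln (real n))
   \<and>
   (\<exists>c>0. \<exists>N. \<forall>n \<ge> 2. \<forall>\<alpha> \<beta> \<epsilon> :: real. \<forall>V :: circuit. \<forall>\<psi>.
      \<alpha> \<in> {0..1} \<longrightarrow> \<beta> \<in> {0..1} \<longrightarrow> \<epsilon> > 0 \<longrightarrow>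
      valid_circuit (2*n) V \<longrightarrow>
      \<psi> = circuit_mat (2*n) V * cat_dm \<alpha> (2*n) * adj (circuit_mat (2*n) V) \<longrightarrow>
      trace_norm (\<psi> - tensor_mat (cat_dm \<beta> n) (cat_dm \<beta> n)) \<le> \<epsilon> \<longrightarrow>
      min (real n) (\<bar>2 * bin_entropy \<beta> - bin_entropy \<alpha>\<bar> powr (ln 4) / \<epsilon>) \<ge> N \<longrightarrow>
      real (depth V) \<ge> c * ln (min (real n) (\<bar>2 * bin_entropy \<beta> - bin_entropy \<alpha>\<bar> powr (ln 4) / \<epsilon>)))"
proof -
  have c: "1 / (2 * ln 4) > (0::real)" using ln_4_gt_1 by simp
  show ?thesis
    apply (intro conjI)
    subgoal using c depth_lower_bound_exact by (intro exI[of _ "1 / (2 * ln 4)"] conjI exI[of _ 3]) blast+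
    subgoal using c depth_lower_bound_approx
      by (intro exI[of _ "1 / (2 * ln 4)"] conjI exI[of _ "max 3 (8 * entropy_gap_const + 1)"]) blast+
    done
qed

end
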